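(* Let $s_1,\dots,s_{d-1}$ be positive integers, $s_0=s_d=1$, with $s_{i-1}s_i\le n_i$ for all $i$, let $H$ be the stabilizer in $G$ of $T=\sum_{\alpha_1,\dots,\alpha_{d-1}} e_1^{\alpha_1}\otimes e_2^{\iota_2(\alpha_1,\alpha_2)}\otimes\cdots\otimes e_{d-1}^{\iota_{d-1}(\alpha_{d-2},\alpha_{d-1})}\otimes e_d^{\alpha_{d-1}}$, so that $\Pi_{s_1\dots s_{d-1}}=G/H$. Then $G/H$ is reductive if and only if $n_i=s_{i-1}s_i$ for all $i=1,\dots,d$ (i.e. $n_1=s_1$, $n_i=s_{i-1}s_i$ for $2\le i\le d-1$, $n_d=s_{d-1}$). Moreover, in that case the orthogonal complement $\mathfrak{m}$ of $\mathfrak{h}$ in $\mathfrak{g}$ (with respect to $\langle Z,Z'\rangle=\sum_i\mathrm{tr}(Z_iZ_i'^{\mathsf T})$) satisfies $h\mathfrak{m}h^{-1}\subset\mathfrak{m}$ for all $h\in H$.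
   Context: Fix integers $d\ge 3$ and $n_1,\dots,n_d\ge 2$. $V=\mathbb{R}^{n_1}\otimes\cdots\otimes\mathbb{R}^{n_d}$, and $G=\mathrm{GL}(n_1)\times\cdots\times\mathrm{GL}(n_d)$ acts on $V$ by $(g_1,\dots,g_d)\cdot(v_1\otimes\cdots\otimes v_d)=(g_1v_1)\otimes\cdots\otimes(g_dv_d)$, extended linearly. $e_i^1,\dots,e_i^{n_i}$ is the standard basis of $\mathbb{R}^{n_i}$. For $2\le i\le d-1$, $\iota_i:[s_{i-1}]\times[s_i]\to[s_{i-1}s_i]$ is the lexicographic bijection with the first argument most significant. $\mathfrak{g}=\mathfrak{gl}(n_1)\times\cdots\times\mathfrak{gl}(n_d)$ is the Lie algebra of $G$, $\mathfrak{h}$ the Lie algebra of $H$, and $H$ acts on $\mathfrak{g}$ by $hZh^{-1}=(h_iZ_ih_i^{-1})_i$. A homogeneous space $G/H$ is called reductive if there exists a linear subspace $\mathfrak{p}\subset\mathfrak{g}$ with $\mathfrak{p}\oplus\mathfrak{h}=\mathfrak{g}$ and $h\mathfrak{p}h^{-1}\subset\mathfrak{p}$ for all $h\in H$. *)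

theory Defs
  imports Complex_Main
begin

(* Conventions: tensor factors are indexed by i \<in> {1..d}; inside factor i the
   basis vectors are indexed 0-based, a < n i (e_i^{a+1} in the paper).
   A square matrix of size m is a function nat \<Rightarrow> nat \<Rightarrow> real that vanishes
   outside {0..<m} \<times> {0..<m}.  An element of gl(n_1) x ... x gl(n_d) is a
   function Z :: nat \<Rightarrow> nat \<Rightarrow> nat \<Rightarrow> real, Z i being the i-th block. *)

type_synonym mat = "nat \<Rightarrow> nat \<Rightarrow> real"
type_synonym tup = "nat \<Rightarrow> mat"
type_synonym tensor = "(nat \<Rightarrow> nat) \<Rightarrow> real"

definition mmul :: "nat \<Rightarrow> mat \<Rightarrow> mat \<Rightarrow> mat" where
  "mmul m A B = (\<lambda>a b. if a < m \<and> b < m then (\<Sum>c<m. A a c * B c b) else 0)"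

definition mident :: "nat \<Rightarrow> mat" where
  "mident m = (\<lambda>a b. if a < m \<and> b < m \<and> a = b then 1 else 0)"

fun mpow :: "nat \<Rightarrow> mat \<Rightarrow> nat \<Rightarrow> mat" where
  "mpow m A 0 = mident m"
| "mpow m A (Suc k) = mmul m (mpow m A k) A"

definition mexp :: "nat \<Rightarrow> mat \<Rightarrow> mat" where
  "mexp m A = (\<lambda>a b. (\<Sum>k. mpow m A k a b / fact k))"

definition minv :: "nat \<Rightarrow> mat \<Rightarrow> mat" where
  "minv m A = (SOME B. (\<forall>a b. (a \<ge> m \<or> b \<ge> m) \<longrightarrow> B a b = 0)
                      \<and> mmul m A B = mident m \<and> mmul m B A = mident m)"

definition gl_alg :: "nat \<Rightarrow> (nat \<Rightarrow> nat) \<Rightarrow> tup set" where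
  "gl_alg d n = {Z. \<forall>i a b. (i \<notin> {1..d} \<or> a \<ge> n i \<or> b \<ge> n i) \<longrightarrow> Z i a b = 0}"

definition GL_grp :: "nat \<Rightarrow> (nat \<Rightarrow> nat) \<Rightarrow> tup set" where
  "GL_grp d n = {g \<in> gl_alg d n. \<forall>i\<in>{1..d}. \<exists>B.
      (\<forall>a b. (a \<ge> n i \<or> b \<ge> n i) \<longrightarrow> B a b = 0)
      \<and> mmul (n i) (g i) B = mident (n i) \<and> mmul (n i) B (g i) = mident (n i)}"

definition gexp :: "nat \<Rightarrow> (nat \<Rightarrow> nat) \<Rightarrow> tup \<Rightarrow> tup" where
  "gexp d n Z = (\<lambda>i. if i \<in> {1..d} then mexp (n i) (Z i) else (\<lambda>a b. 0))"

definition gscale :: "real \<Rightarrow> tup \<Rightarrow> tup" where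
  "gscale t Z = (\<lambda>i a b. t * Z i a b)"

definition gadd :: "tup \<Rightarrow> tup \<Rightarrow> tup" where
  "gadd Z Y = (\<lambda>i a b. Z i a b + Y i a b)"

definition gconj :: "nat \<Rightarrow> (nat \<Rightarrow> nat) \<Rightarrow> tup \<Rightarrow> tup \<Rightarrow> tup" where
  "gconj d n h Z = (\<lambda>i. if i \<in> {1..d}
       then mmul (n i) (mmul (n i) (h i) (Z i)) (minv (n i) (h i)) else (\<lambda>a b. 0))"

definition multi_idx :: "nat \<Rightarrow> (nat \<Rightarrow> nat) \<Rightarrow> (nat \<Rightarrow> nat) set" where
  "multi_idx d n = {j. \<forall>i. (i \<in> {1..d} \<longrightarrow> j i < n i) \<and> (i \<notin> {1..d} \<longrightarrow> j i = 0)}"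

definition act :: "nat \<Rightarrow> (nat \<Rightarrow> nat) \<Rightarrow> tup \<Rightarrow> tensor \<Rightarrow> tensor" where
  "act d n g T = (\<lambda>j. if j \<in> multi_idx d n
      then (\<Sum>k\<in>multi_idx d n. (\<Prod>i\<in>{1..d}. g i (j i) (k i)) * T k) else 0)"

definition basis_tensor :: "(nat \<Rightarrow> nat) \<Rightarrow> tensor" where
  "basis_tensor k = (\<lambda>j. if j = k then 1 else 0)"

text \<open>Index tuples alpha = (alpha_1,...,alpha_{d-1}), alpha_i < s_i (0-based),
  extended by alpha_0 = alpha_d = 0.\<close>
definition alpha_set :: "nat \<Rightarrow> (nat \<Rightarrow> nat) \<Rightarrow> (nat \<Rightarrow> nat) set" where
  "alpha_set d s = {\<alpha>. \<forall>i. (i \<in> {1..d-1} \<longrightarrow> \<alpha> i < s i) \<and> (i \<notin> {1..d-1} \<longrightarrow> \<alpha> i = 0)}"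

text \<open>Lexicographic bijection iota_i(a,b) = a * s_i + b (0-based, first argument most significant).\<close>
definition iota :: "(nat \<Rightarrow> nat) \<Rightarrow> nat \<Rightarrow> nat \<Rightarrow> nat \<Rightarrow> nat" where
  "iota s i a b = a * s i + b"

text \<open>The multi-index (alpha_1, iota_2(alpha_1,alpha_2), ..., iota_{d-1}(..), alpha_{d-1});
  for i = 1 and i = d this reduces to alpha_1 resp. alpha_{d-1} since alpha_0 = alpha_d = 0, s_d = 1.\<close>
definition mps_index :: "nat \<Rightarrow> (nat \<Rightarrow> nat) \<Rightarrow> (nat \<Rightarrow> nat) \<Rightarrow> (nat \<Rightarrow> nat)" where
  "mps_index d s \<alpha> = (\<lambda>i. if i = 1 then \<alpha> 1
                         else if i = d then \<alpha> (d - 1)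
                         else if 2 \<le> i \<and> i \<le> d - 1 then iota s i (\<alpha> (i - 1)) (\<alpha> i)
                         else 0)"

definition T_mps :: "nat \<Rightarrow> (nat \<Rightarrow> nat) \<Rightarrow> tensor" where
  "T_mps d s = (\<lambda>j. \<Sum>\<alpha>\<in>alpha_set d s. basis_tensor (mps_index d s \<alpha>) j)"

definition stab :: "nat \<Rightarrow> (nat \<Rightarrow> nat) \<Rightarrow> tensor \<Rightarrow> tup set" where
  "stab d n T = {g \<in> GL_grp d n. act d n g T = T}"

definition lie_alg :: "nat \<Rightarrow> (nat \<Rightarrow> nat) \<Rightarrow> tup set \<Rightarrow> tup set" where
  "lie_alg d n H = {Z \<in> gl_alg d n. \<forall>t::real. gexp d n (gscale t Z) \<in> H}"

definition lin_subspace :: "nat \<Rightarrow> (nat \<Rightarrow> nat) \<Rightarrow> tup set \<Rightarrow> bool" where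
  "lin_subspace d n P \<longleftrightarrow> P \<subseteq> gl_alg d n \<and> (\<lambda>i a b. 0) \<in> P
     \<and> (\<forall>X\<in>P. \<forall>Y\<in>P. gadd X Y \<in> P) \<and> (\<forall>X\<in>P. \<forall>c. gscale c X \<in> P)"

definition reductive :: "nat \<Rightarrow> (nat \<Rightarrow> nat) \<Rightarrow> tup set \<Rightarrow> bool" where
  "reductive d n H \<longleftrightarrow> (\<exists>P. lin_subspace d n P
      \<and> P \<inter> lie_alg d n H = {\<lambda>i a b. 0}
      \<and> {gadd X Y | X Y. X \<in> P \<and> Y \<in> lie_alg d n H} = gl_alg d n
      \<and> (\<forall>h\<in>H. gconj d n h ` P \<subseteq> P))"

definition ginner :: "nat \<Rightarrow> (nat \<Rightarrow> nat) \<Rightarrow> tup \<Rightarrow> tup \<Rightarrow> real" where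
  "ginner d n Z Y = (\<Sum>i\<in>{1..d}. \<Sum>a<n i. \<Sum>b<n i. Z i a b * Y i a b)"

definition orth_compl :: "nat \<Rightarrow> (nat \<Rightarrow> nat) \<Rightarrow> tup set \<Rightarrow> tup set" where
  "orth_compl d n S = {Z \<in> gl_alg d n. \<forall>Y\<in>S. ginner d n Z Y = 0}"

end

(* The Lie algebra h of the stabiliser H of T is the annihilator {Z. Z.T = 0} of T under the
   infinitesimal action; this follows by differentiating t -> exp(tZ).T.

   If n_i = s_{i-1} s_i for all i, every basis vector of R^{n_i} occurs equally often in T, so
   <T, (M acting on factor i).T> is a multiple of tr M.  For Y in h this gives
   |Y^T.T|^2 = <T, [Y, Y^T].T> = 0, so h is closed under transposition.  Since
   <h Z h^-1, Y> = <Z, (h^-1 Y^T h)^T> and H normalises h, the orthogonal complement m of h is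
   then H-invariant, and g = m + h is an orthogonal direct sum.

   If r = s_{i-1} s_i < n_i for some i, the basis vector of index r never occurs in factor i
   of T, so the unipotent u = 1 + E_{0r} acting on factor i lies in H.  Given an H-invariant
   complement P of h, write E_{r0} = p + y with p in P and y in h.  Then y_{r0} = 0, and
   (Ad u - 1)^2 p = -2 p_{r0} E_{0r} is a nonzero element of P that also lies in h. *)

theory Submission
  imports Defs
begin

section \<open>Matrices and the matrix exponential\<close>

definition msmult :: "real \<Rightarrow> mat \<Rightarrow> mat" where
  "msmult t A = (\<lambda>a b. t * A a b)"

definition msupported :: "nat \<Rightarrow> mat \<Rightarrow> bool" where
  "msupported m A \<longleftrightarrow> (\<forall>a b. (a \<ge> m \<or> b \<ge> m) \<longrightarrow> A a b = 0)"

lemma mmul_supported: "msupported m (mmul m A B)"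
  unfolding msupported_def mmul_def by auto

lemma mident_supported: "msupported m (mident m)"
  by (simp add: msupported_def mident_def)

lemma mpow_supported: "msupported m (mpow m A k)"
  by (cases k) (simp_all add: mident_supported mmul_supported)

lemma mmul_eq_zero_outside: "\<not> (a < m \<and> b < m) \<Longrightarrow> mmul m A B a b = 0"
  unfolding mmul_def by auto

lemma mmul_eq_sum: "a < m \<Longrightarrow> b < m \<Longrightarrow> mmul m A B a b = (\<Sum>c<m. A a c * B c b)"
  unfolding mmul_def by auto

lemma mmul_assoc: "mmul m (mmul m A B) C = mmul m A (mmul m B C)"
proof (intro ext)
  fix a b
  show "mmul m (mmul m A B) C a b = mmul m A (mmul m B C) a b"
  proof (cases "a < m \<and> b < m")
    case True
    have "mmul m (mmul m A B) C a b = (\<Sum>c<m. \<Sum>e<m. A a e * B e c * C c b)"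
      using True by (simp add: mmul_eq_sum sum_distrib_right)
    also have "\<dots> = (\<Sum>e<m. \<Sum>c<m. A a e * B e c * C c b)"
      by (rule sum.swap)
    also have "\<dots> = mmul m A (mmul m B C) a b"
      using True by (simp add: mmul_eq_sum sum_distrib_left mult.assoc)
    finally show ?thesis .
  qed (simp add: mmul_eq_zero_outside)
qed

lemma mmul_mident_left_eq:
  "mmul m (mident m) A = (\<lambda>a b. if a < m \<and> b < m then A a b else 0)"
  by (auto simp: fun_eq_iff mmul_def mident_def if_distrib[of "\<lambda>x. x * _"] cong: if_cong)

lemma mmul_mident_right_eq:
  "mmul m A (mident m) = (\<lambda>a b. if a < m \<and> b < m then A a b else 0)"
  by (auto simp: fun_eq_iff mmul_def mident_def if_distrib[of "\<lambda>x. _ * x"] cong: if_cong)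

lemma msupported_truncate:
  "msupported m A \<Longrightarrow> (\<lambda>a b. if a < m \<and> b < m then A a b else 0) = A"
  by (auto simp: msupported_def fun_eq_iff)

lemma mmul_mident_left: "msupported m A \<Longrightarrow> mmul m (mident m) A = A"
  by (simp add: mmul_mident_left_eq msupported_truncate)

lemma mmul_mident_right: "msupported m A \<Longrightarrow> mmul m A (mident m) = A"
  by (simp add: mmul_mident_right_eq msupported_truncate)

lemma mpow_mmul_commute: "mmul m (mpow m A k) A = mmul m A (mpow m A k)"
proof (induction k)
  case 0
  then show ?case by (simp add: mmul_mident_left_eq mmul_mident_right_eq)
next
  case (Suc k)
  then show ?case by (simp add: mmul_assoc)
qed

lemma mmul_msmult_left: "mmul m (msmult t A) B = msmult t (mmul m A B)"
  by (auto simp: mmul_def msmult_def fun_eq_iff sum_distrib_left mult.assoc)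

lemma mmul_msmult_right: "mmul m A (msmult t B) = msmult t (mmul m A B)"
  by (auto simp: mmul_def msmult_def fun_eq_iff sum_distrib_left mult.left_commute)

lemma msmult_msmult: "msmult x (msmult y A) = msmult (x * y) A"
  by (simp add: msmult_def fun_eq_iff)

lemma mpow_msmult: "mpow m (msmult t A) k = msmult (t ^ k) (mpow m A k)"
proof (induction k)
  case (Suc k)
  then show ?case
    by (simp add: mmul_msmult_left mmul_msmult_right msmult_msmult mult.commute)
qed (simp add: msmult_def)

definition mbound :: "nat \<Rightarrow> mat \<Rightarrow> real" where
  "mbound m A = real m * (\<Sum>a<m. \<Sum>b<m. \<bar>A a b\<bar>)"

lemma mbound_nonneg: "0 \<le> mbound m A"
  by (simp add: mbound_def sum_nonneg)

lemma abs_entry_le_sum: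
  fixes A :: mat
  assumes "a < m" "b < m"
  shows "\<bar>A a b\<bar> \<le> (\<Sum>a<m. \<Sum>b<m. \<bar>A a b\<bar>)"
proof -
  have "\<bar>A a b\<bar> \<le> (\<Sum>b<m. \<bar>A a b\<bar>)"
    using assms by (intro member_le_sum[where f="\<lambda>b. \<bar>A a b\<bar>"]) auto
  also have "\<dots> \<le> (\<Sum>a<m. \<Sum>b<m. \<bar>A a b\<bar>)"
    using assms by (intro member_le_sum[where f="\<lambda>a. \<Sum>b<m. \<bar>A a b\<bar>"]) (auto intro: sum_nonneg)
  finally show ?thesis .
qed

lemma abs_mpow_le: "\<bar>mpow m A k a b\<bar> \<le> mbound m A ^ k"
proof (induction k arbitrary: a b)
  case 0
  then show ?case by (simp add: mident_def)
next
  case (Suc k)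
  show ?case
  proof (cases "a < m \<and> b < m")
    case True
    have "\<bar>mpow m A (Suc k) a b\<bar> \<le> (\<Sum>c<m. \<bar>mpow m A k a c\<bar> * \<bar>A c b\<bar>)"
      using True by (simp add: mmul_eq_sum order_trans[OF sum_abs] abs_mult)
    also have "\<dots> \<le> (\<Sum>c<m. mbound m A ^ k * (\<Sum>a<m. \<Sum>b<m. \<bar>A a b\<bar>))"
      using True by (intro sum_mono mult_mono Suc.IH abs_entry_le_sum) (auto intro: mbound_nonneg zero_le_power)
    also have "\<dots> = mbound m A ^ Suc k"
      by (simp add: mbound_def mult_ac)
    finally show ?thesis .
  qed (simp add: mmul_eq_zero_outside mbound_nonneg)
qed

definition mexp_coeff :: "nat \<Rightarrow> mat \<Rightarrow> nat \<Rightarrow> nat \<Rightarrow> nat \<Rightarrow> real" where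
  "mexp_coeff m A a b k = mpow m A k a b / fact k"

lemma abs_mexp_coeff_le: "\<bar>mexp_coeff m A a b k\<bar> \<le> mbound m A ^ k / fact k"
  by (simp add: mexp_coeff_def divide_right_mono abs_mpow_le)

lemma summable_mexp_coeff: "summable (\<lambda>k. mexp_coeff m A a b k * x ^ k)"
proof (rule summable_comparison_test[OF _ summable_exp[of "mbound m A * \<bar>x\<bar>"]], intro exI allI impI)
  fix k :: nat
  have "norm (mexp_coeff m A a b k * x ^ k) \<le> mbound m A ^ k / fact k * \<bar>x\<bar> ^ k"
    unfolding real_norm_def abs_mult power_abs
    by (intro mult_right_mono abs_mexp_coeff_le) simp
  then show "norm (mexp_coeff m A a b k * x ^ k) \<le> inverse (fact k) * (mbound m A * \<bar>x\<bar>) ^ k"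
    by (simp add: power_mult_distrib field_simps)
qed

lemma mexp_msmult: "mexp m (msmult t A) = (\<lambda>a b. \<Sum>k. mexp_coeff m A a b k * t ^ k)"
  unfolding mexp_def mpow_msmult by (simp add: msmult_def mexp_coeff_def mult_ac)

lemma mexp_msmult_zero: "mexp m (msmult 0 A) = mident m"
  unfolding mexp_msmult powser_zero by (simp add: mexp_coeff_def)

lemma mexp_supported: "msupported m (mexp m A)"
  using mpow_supported[of m A] by (simp add: msupported_def mexp_def)

lemma mmul_suminf_left:
  assumes "\<And>a c. summable (\<lambda>k. F k a c)"
  shows "mmul m (\<lambda>a c. \<Sum>k. F k a c) B a b = (\<Sum>k. mmul m (F k) B a b)"
proof (cases "a < m \<and> b < m")
  case True
  have "mmul m (\<lambda>a c. \<Sum>k. F k a c) B a b = (\<Sum>c<m. \<Sum>k. F k a c * B c b)"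
    using True assms by (simp add: mmul_eq_sum suminf_mult2)
  also have "\<dots> = (\<Sum>k. mmul m (F k) B a b)"
    using True assms by (simp add: mmul_eq_sum suminf_sum summable_mult2)
  finally show ?thesis .
qed (simp add: mmul_eq_zero_outside)

lemma mmul_suminf_right:
  assumes "\<And>a c. summable (\<lambda>k. F k a c)"
  shows "mmul m B (\<lambda>a c. \<Sum>k. F k a c) a b = (\<Sum>k. mmul m B (F k) a b)"
proof (cases "a < m \<and> b < m")
  case True
  have "mmul m B (\<lambda>a c. \<Sum>k. F k a c) a b = (\<Sum>c<m. \<Sum>k. B a c * F k c b)"
    using True assms by (simp add: mmul_eq_sum suminf_mult)
  also have "\<dots> = (\<Sum>k. mmul m B (F k) a b)"
    using True assms by (simp add: mmul_eq_sum suminf_sum summable_mult)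
  finally show ?thesis .
qed (simp add: mmul_eq_zero_outside)

lemma mexp_coeff_term: "(\<lambda>a b. mexp_coeff m A a b k * t ^ k) = msmult (t ^ k / fact k) (mpow m A k)"
  by (simp add: mexp_coeff_def msmult_def fun_eq_iff)

lemma mexp_mmul_eq_suminf:
  "mmul m (mexp m (msmult t A)) A a b = (\<Sum>k. t ^ k / fact k * mpow m A (Suc k) a b)"
proof -
  have "mmul m (mexp m (msmult t A)) A a b = (\<Sum>k. mmul m (\<lambda>a c. mexp_coeff m A a c k * t ^ k) A a b)"
    unfolding mexp_msmult by (rule mmul_suminf_left) (rule summable_mexp_coeff)
  then show ?thesis
    by (simp only: mexp_coeff_term mmul_msmult_left) (simp add: msmult_def)
qed

lemma mmul_mexp_eq_suminf:
  "mmul m A (mexp m (msmult t A)) a b = (\<Sum>k. t ^ k / fact k * mpow m A (Suc k) a b)"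
proof -
  have "mmul m A (mexp m (msmult t A)) a b = (\<Sum>k. mmul m A (\<lambda>a c. mexp_coeff m A a c k * t ^ k) a b)"
    unfolding mexp_msmult by (rule mmul_suminf_right) (rule summable_mexp_coeff)
  then show ?thesis
    by (simp only: mexp_coeff_term mmul_msmult_right) (simp add: msmult_def mpow_mmul_commute)
qed

lemma mexp_mmul_commute: "mmul m (mexp m (msmult t A)) A = mmul m A (mexp m (msmult t A))"
  by (intro ext) (simp only: mexp_mmul_eq_suminf mmul_mexp_eq_suminf)

lemma diffs_mexp_coeff: "diffs (mexp_coeff m A a b) k = mpow m A (Suc k) a b / fact k"
  by (simp add: diffs_def mexp_coeff_def del: mpow.simps)

lemma has_field_derivative_mexp:
  "((\<lambda>t. mexp m (msmult t A) a b) has_field_derivative mmul m (mexp m (msmult t A)) A a b) (at t)"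
proof -
  have "mmul m (mexp m (msmult t A)) A a b = (\<Sum>k. diffs (mexp_coeff m A a b) k * t ^ k)"
    by (simp add: mexp_mmul_eq_suminf diffs_mexp_coeff mult.commute del: mpow.simps)
  with termdiffs_strong_converges_everywhere[OF summable_mexp_coeff]
  show ?thesis by (simp add: mexp_msmult)
qed

lemma mexp_msmult_neg: "mexp m (msmult (-t) A) = mexp m (msmult t (msmult (-1) A))"
  by (simp add: msmult_msmult)

lemma mexp_neg_mmul_commute: "mmul m (mexp m (msmult (-t) A)) A = mmul m A (mexp m (msmult (-t) A))"
proof -
  have "msmult (-1) (mmul m (mexp m (msmult (-t) A)) A) = msmult (-1) (mmul m A (mexp m (msmult (-t) A)))"
    using mexp_mmul_commute[of m t "msmult (-1) A"]
    by (simp only: mexp_msmult_neg mmul_msmult_left mmul_msmult_right)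
  then show ?thesis
    by (simp add: msmult_def fun_eq_iff)
qed

lemma has_field_derivative_mexp_neg:
  "((\<lambda>t. mexp m (msmult (-t) A) a b) has_field_derivative - mmul m (mexp m (msmult (-t) A)) A a b) (at t)"
  using has_field_derivative_mexp[of m "msmult (-1) A" a b t]
  by (simp add: mexp_msmult_neg [symmetric] mmul_msmult_right) (simp add: msmult_def)

lemma mexp_mmul_mexp_neg: "mmul m (mexp m (msmult t A)) (mexp m (msmult (-t) A)) = mident m"
proof (intro ext)
  fix a b
  show "mmul m (mexp m (msmult t A)) (mexp m (msmult (-t) A)) a b = mident m a b"
  proof (cases "a < m \<and> b < m")
    case True
    let ?E = "\<lambda>x. mexp m (msmult x A)" and ?F = "\<lambda>x. mexp m (msmult (-x) A)"
    have "((\<lambda>x. \<Sum>c<m. ?E x a c * ?F x c b) has_field_derivative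
            (\<Sum>c<m. mmul m (?E x) A a c * ?F x c b + - mmul m (?F x) A c b * ?E x a c)) (at x)" for x
      by (intro DERIV_sum DERIV_mult has_field_derivative_mexp has_field_derivative_mexp_neg)
    moreover have "(\<Sum>c<m. mmul m (?E x) A a c * ?F x c b + - mmul m (?F x) A c b * ?E x a c)
        = mmul m (mmul m (?E x) A) (?F x) a b - mmul m (?E x) (mmul m (?F x) A) a b" for x
      using True by (simp add: mmul_eq_sum sum_subtractf algebra_simps)
    ultimately have "((\<lambda>x. \<Sum>c<m. ?E x a c * ?F x c b) has_field_derivative 0) (at x)" for x
      by (simp add: mmul_assoc mexp_neg_mmul_commute)
    then have "(\<Sum>c<m. ?E t a c * ?F t c b) = (\<Sum>c<m. ?E 0 a c * ?F 0 c b)"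
      by (intro DERIV_isconst_all allI)
    also have "\<dots> = mmul m (mident m) (mident m) a b"
      using True by (simp add: mexp_msmult_zero mmul_eq_sum)
    finally show ?thesis
      using True by (simp add: mmul_eq_sum mmul_mident_left mident_supported)
  qed (auto simp: mmul_eq_zero_outside mident_def)
qed

section \<open>Multi-indices and the action on tensors\<close>

definition index_box :: "nat set \<Rightarrow> (nat \<Rightarrow> nat) \<Rightarrow> (nat \<Rightarrow> nat) set" where
  "index_box I n = {k. \<forall>i. (i \<in> I \<longrightarrow> k i < n i) \<and> (i \<notin> I \<longrightarrow> k i = 0)}"

lemma multi_idx_eq_index_box: "multi_idx d n = index_box {1..d} n"
  by (simp add: multi_idx_def index_box_def)

lemma index_box_empty: "index_box {} n = {\<lambda>_. 0}"
  by (auto simp: index_box_def)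

lemma index_box_insert:
  assumes "x \<notin> I"
  shows "index_box (insert x I) n = (\<lambda>(c, k). k(x := c)) ` ({..<n x} \<times> index_box I n)"
proof (intro set_eqI iffI)
  fix K assume "K \<in> index_box (insert x I) n"
  then have "K = (\<lambda>(c, k). k(x := c)) (K x, K(x := 0))"
    and "(K x, K(x := 0)) \<in> {..<n x} \<times> index_box I n"
    using assms by (auto simp: index_box_def)
  then show "K \<in> (\<lambda>(c, k). k(x := c)) ` ({..<n x} \<times> index_box I n)"
    by blast
qed (auto simp: index_box_def)

lemma inj_on_index_box_insert:
  assumes "x \<notin> I"
  shows "inj_on (\<lambda>(c, k). k(x := c)) ({..<n x} \<times> index_box I n)"
proof (rule inj_onI, clarify)
  fix c k c' k'
  assume k: "k \<in> index_box I n" "k' \<in> index_box I n" and eq: "k(x := c) = k'(x := c')"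
  have "k i = k' i" for i
    using fun_cong[OF eq, of i] k assms by (cases "i = x") (auto simp: index_box_def)
  then show "c = c' \<and> k = k'"
    using fun_cong[OF eq, of x] by auto
qed

lemma finite_index_box: "finite I \<Longrightarrow> finite (index_box I n)"
  by (induction I rule: finite_induct) (auto simp: index_box_empty index_box_insert)

lemma finite_multi_idx: "finite (multi_idx d n)"
  by (simp add: multi_idx_eq_index_box finite_index_box)

lemma sum_index_box_insert:
  assumes "x \<notin> I"
  shows "(\<Sum>k\<in>index_box (insert x I) n. f k) = (\<Sum>c<n x. \<Sum>k\<in>index_box I n. f (k(x := c)))"
  unfolding index_box_insert[OF assms]
  by (subst sum.reindex[OF inj_on_index_box_insert[OF assms]])
     (simp add: sum.cartesian_product case_prod_beta)

lemma sum_index_box_remove: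
  assumes "p \<in> I"
  shows "(\<Sum>k\<in>index_box I n. f k) = (\<Sum>c<n p. \<Sum>k\<in>index_box (I - {p}) n. f (k(p := c)))"
  using sum_index_box_insert[of p "I - {p}"] assms by (simp add: insert_absorb)

lemma sum_prod_index_box:
  fixes F :: "nat \<Rightarrow> nat \<Rightarrow> real"
  assumes "finite I"
  shows "(\<Sum>k\<in>index_box I n. \<Prod>i\<in>I. F i (k i)) = (\<Prod>i\<in>I. \<Sum>c<n i. F i c)"
  using assms
proof (induction I rule: finite_induct)
  case empty
  then show ?case by (simp add: index_box_empty)
next
  case (insert x I)
  have "(\<Prod>i\<in>I. F i ((k(x := c)) i)) = (\<Prod>i\<in>I. F i (k i))" for k c
    using insert.hyps by (intro prod.cong) auto
  then have "(\<Sum>k\<in>index_box (insert x I) n. \<Prod>i\<in>insert x I. F i (k i))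
      = (\<Sum>c<n x. F x c) * (\<Sum>k\<in>index_box I n. \<Prod>i\<in>I. F i (k i))"
    using insert.hyps by (simp add: sum_index_box_insert sum_product)
  then show ?case
    using insert by simp
qed

definition gembed :: "nat \<Rightarrow> (nat \<Rightarrow> nat) \<Rightarrow> nat \<Rightarrow> mat \<Rightarrow> tup" where
  "gembed d n i M = (\<lambda>m. if m \<in> {1..d} then (if m = i then M else mident (n m)) else (\<lambda>a b. 0))"

definition gmul :: "nat \<Rightarrow> (nat \<Rightarrow> nat) \<Rightarrow> tup \<Rightarrow> tup \<Rightarrow> tup" where
  "gmul d n g h = (\<lambda>i. if i \<in> {1..d} then mmul (n i) (g i) (h i) else (\<lambda>a b. 0))"

definition gone :: "nat \<Rightarrow> (nat \<Rightarrow> nat) \<Rightarrow> tup" where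
  "gone d n = (\<lambda>i. if i \<in> {1..d} then mident (n i) else (\<lambda>a b. 0))"

lemma multi_idx_less: "j \<in> multi_idx d n \<Longrightarrow> i \<in> {1..d} \<Longrightarrow> j i < n i"
  by (simp add: multi_idx_def)

lemma act_eq_zero_outside: "j \<notin> multi_idx d n \<Longrightarrow> act d n g S j = 0"
  by (simp add: act_def)

lemma act_eq_sum:
  "j \<in> multi_idx d n \<Longrightarrow> act d n g S j = (\<Sum>k\<in>multi_idx d n. (\<Prod>i\<in>{1..d}. g i (j i) (k i)) * S k)"
  by (simp add: act_def)

lemma act_cong_tuple:
  assumes "\<And>i a b. i \<in> {1..d} \<Longrightarrow> a < n i \<Longrightarrow> b < n i \<Longrightarrow> g i a b = g' i a b"
  shows "act d n g S = act d n g' S"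
  using assms by (auto simp: act_def multi_idx_def fun_eq_iff intro!: sum.cong prod.cong)

lemma act_gmul: "act d n g (act d n h S) = act d n (gmul d n g h) S"
proof (intro ext)
  fix j
  show "act d n g (act d n h S) j = act d n (gmul d n g h) S j"
  proof (cases "j \<in> multi_idx d n")
    case True
    let ?M = "multi_idx d n"
    have "act d n g (act d n h S) j
        = (\<Sum>k\<in>?M. \<Sum>l\<in>?M. (\<Prod>i\<in>{1..d}. g i (j i) (k i) * h i (k i) (l i)) * S l)"
      using True by (simp add: act_eq_sum sum_distrib_left prod.distrib mult.assoc)
    also have "\<dots> = (\<Sum>l\<in>?M. (\<Sum>k\<in>?M. \<Prod>i\<in>{1..d}. g i (j i) (k i) * h i (k i) (l i)) * S l)"
      by (subst sum.swap) (simp add: sum_distrib_right)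
    also have "\<dots> = (\<Sum>l\<in>?M. (\<Prod>i\<in>{1..d}. \<Sum>c<n i. g i (j i) c * h i c (l i)) * S l)"
      by (simp add: multi_idx_eq_index_box sum_prod_index_box[where F="\<lambda>i c. g i (j i) c * h i c (_ i)"])
    also have "\<dots> = act d n (gmul d n g h) S j"
      unfolding act_eq_sum[OF True]
    proof (intro sum.cong refl arg_cong2[where f="(*)"] prod.cong)
      fix l i
      assume "l \<in> ?M" "i \<in> {1..d}"
      then show "(\<Sum>c<n i. g i (j i) c * h i c (l i)) = gmul d n g h i (j i) (l i)"
        using True by (simp add: gmul_def mmul_eq_sum multi_idx_less)
    qed
    finally show ?thesis .
  qed (simp add: act_eq_zero_outside)
qed

lemma prod_mident_eq_indicator:
  assumes j: "j \<in> multi_idx d n" and k: "k \<in> index_box ({1..d} - {i}) n"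
  shows "(\<Prod>m\<in>{1..d} - {i}. mident (n m) (j m) (k m)) = (if k = j(i := 0) then 1 else 0)"
proof (cases "k = j(i := 0)")
  case True
  then have "(\<Prod>m\<in>{1..d} - {i}. mident (n m) (j m) (k m)) = 1"
    using j by (intro prod.neutral) (auto simp: mident_def multi_idx_less)
  with True show ?thesis
    by simp
next
  case False
  then obtain m where m: "k m \<noteq> (j(i := 0)) m"
    by (auto simp: fun_eq_iff)
  have "k m = 0 \<and> (j(i := 0)) m = 0" if "m \<notin> {1..d} - {i}"
    using that j k by (auto simp: index_box_def multi_idx_def)
  with m have "m \<in> {1..d} - {i}"
    by force
  moreover from m this have "mident (n m) (j m) (k m) = 0"
    by (simp add: mident_def)
  ultimately have "(\<Prod>m\<in>{1..d} - {i}. mident (n m) (j m) (k m)) = 0"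
    by (intro prod_zero) auto
  with False show ?thesis
    by simp
qed

lemma act_gembed:
  assumes j: "j \<in> multi_idx d n" and i: "i \<in> {1..d}"
  shows "act d n (gembed d n i M) S j = (\<Sum>c<n i. M (j i) c * S (j(i := c)))"
proof -
  let ?I = "{1..d}"
  have split: "(\<Prod>m\<in>?I. gembed d n i M m (j m) ((k(i := c)) m))
      = M (j i) c * (\<Prod>m\<in>?I - {i}. mident (n m) (j m) (k m))" for k c
  proof -
    have "(\<Prod>m\<in>?I - {i}. gembed d n i M m (j m) ((k(i := c)) m)) = (\<Prod>m\<in>?I - {i}. mident (n m) (j m) (k m))"
      by (rule prod.cong) (auto simp: gembed_def)
    then show ?thesis
      using i by (subst prod.remove[of ?I i]) (auto simp: gembed_def)
  qed
  have "act d n (gembed d n i M) S j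
      = (\<Sum>c<n i. \<Sum>k\<in>index_box (?I - {i}) n.
           (\<Prod>m\<in>?I. gembed d n i M m (j m) ((k(i := c)) m)) * S (k(i := c)))"
    using j i by (simp add: act_eq_sum multi_idx_eq_index_box sum_index_box_remove[of i] del: fun_upd_apply)
  also have "\<dots> = (\<Sum>c<n i. \<Sum>k\<in>index_box (?I - {i}) n.
           if k = j(i := 0) then M (j i) c * S (k(i := c)) else 0)"
    by (intro sum.cong refl) (simp only: split prod_mident_eq_indicator[OF j] mult_zero_right
        mult_1_right if_distrib[of "\<lambda>x. M (j i) _ * x * _"] mult_zero_left)
  also have "\<dots> = (\<Sum>c<n i. M (j i) c * S (j(i := c)))"
  proof -
    have "j(i := 0) \<in> index_box (?I - {i}) n"
      using j by (auto simp: index_box_def multi_idx_def)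
    then show ?thesis
      by (simp add: finite_index_box)
  qed
  finally show ?thesis .
qed

lemma act_gone:
  assumes "1 \<le> d" "j \<in> multi_idx d n"
  shows "act d n (gone d n) S j = S j"
proof -
  have "act d n (gone d n) S = act d n (gembed d n 1 (mident (n 1))) S"
    by (rule act_cong_tuple) (auto simp: gone_def gembed_def)
  then show ?thesis
    using assms by (simp add: act_gembed mident_def multi_idx_less if_distrib[of "\<lambda>x. x * _"] cong: if_cong)
qed

lemma act_sum: "finite X \<Longrightarrow> act d n g (\<lambda>j. \<Sum>x\<in>X. F x j) j' = (\<Sum>x\<in>X. act d n g (F x) j')"
  by (simp add: act_def sum_distrib_left sum.swap[of _ X])

lemma act_zero: "act d n g (\<lambda>_. 0) = (\<lambda>_. 0)"
  by (simp add: act_def fun_eq_iff)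

definition lie_act :: "nat \<Rightarrow> (nat \<Rightarrow> nat) \<Rightarrow> tup \<Rightarrow> tensor \<Rightarrow> tensor" where
  "lie_act d n Z S = (\<lambda>j. \<Sum>i\<in>{1..d}. act d n (gembed d n i (Z i)) S j)"

lemma lie_act_eq_sum:
  "j \<in> multi_idx d n \<Longrightarrow> lie_act d n Z S j = (\<Sum>i\<in>{1..d}. \<Sum>c<n i. Z i (j i) c * S (j(i := c)))"
  by (simp add: lie_act_def act_gembed)

lemma lie_act_eq_zero_outside: "j \<notin> multi_idx d n \<Longrightarrow> lie_act d n Z S j = 0"
  by (simp add: lie_act_def act_eq_zero_outside)

section \<open>The Lie algebra of a stabiliser\<close>

definition annihilator :: "nat \<Rightarrow> (nat \<Rightarrow> nat) \<Rightarrow> tensor \<Rightarrow> tup set" where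
  "annihilator d n S = {Z \<in> gl_alg d n. lie_act d n Z S = (\<lambda>_. 0)}"

lemma gexp_gscale: "i \<in> {1..d} \<Longrightarrow> gexp d n (gscale t Z) i = mexp (n i) (msmult t (Z i))"
  by (simp add: gexp_def gscale_def msmult_def)

lemma gl_alg_msupported: "Z \<in> gl_alg d n \<Longrightarrow> i \<in> {1..d} \<Longrightarrow> msupported (n i) (Z i)"
  by (simp add: gl_alg_def msupported_def)

lemma prod_gmul_gexp_gembed:
  assumes Z: "Z \<in> gl_alg d n" and i: "i \<in> {1..d}"
  shows "(\<Prod>m\<in>{1..d}. gmul d n (gexp d n (gscale t Z)) (gembed d n i (Z i)) m (j m) (k m))
       = mmul (n i) (mexp (n i) (msmult t (Z i))) (Z i) (j i) (k i)
         * (\<Prod>m\<in>{1..d} - {i}. mexp (n m) (msmult t (Z m)) (j m) (k m))"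
proof -
  have "(\<Prod>m\<in>{1..d} - {i}. gmul d n (gexp d n (gscale t Z)) (gembed d n i (Z i)) m (j m) (k m))
      = (\<Prod>m\<in>{1..d} - {i}. mexp (n m) (msmult t (Z m)) (j m) (k m))"
    by (rule prod.cong) (auto simp: gmul_def gembed_def gexp_gscale mmul_mident_right mexp_supported)
  then show ?thesis
    using i by (subst prod.remove[of _ i]) (auto simp: gmul_def gembed_def gexp_gscale)
qed

lemma has_field_derivative_prod_gexp:
  assumes Z: "Z \<in> gl_alg d n"
  shows "((\<lambda>t. \<Prod>m\<in>{1..d}. gexp d n (gscale t Z) m (j m) (k m)) has_field_derivative
           (\<Sum>i\<in>{1..d}. \<Prod>m\<in>{1..d}. gmul d n (gexp d n (gscale t0 Z)) (gembed d n i (Z i)) m (j m) (k m)))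
         (at t0)"
proof -
  let ?E = "\<lambda>m t. mexp (n m) (msmult t (Z m)) (j m) (k m)"
  have "(\<Prod>m\<in>{1..d}. gexp d n (gscale t Z) m (j m) (k m)) = (\<Prod>m\<in>{1..d}. ?E m t)" for t
    by (rule prod.cong) (simp_all add: gexp_gscale)
  moreover have "((\<lambda>t. \<Prod>m\<in>{1..d}. ?E m t) has_field_derivative
      (\<Sum>i\<in>{1..d}. mmul (n i) (mexp (n i) (msmult t0 (Z i))) (Z i) (j i) (k i) * (\<Prod>m\<in>{1..d} - {i}. ?E m t0)))
      (at t0)"
    by (intro has_field_derivative_prod has_field_derivative_mexp)
  moreover have "(\<Sum>i\<in>{1..d}. mmul (n i) (mexp (n i) (msmult t0 (Z i))) (Z i) (j i) (k i) * (\<Prod>m\<in>{1..d} - {i}. ?E m t0))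
      = (\<Sum>i\<in>{1..d}. \<Prod>m\<in>{1..d}. gmul d n (gexp d n (gscale t0 Z)) (gembed d n i (Z i)) m (j m) (k m))"
    using prod_gmul_gexp_gembed[OF Z] by (intro sum.cong) simp_all
  ultimately show ?thesis
    by simp
qed

lemma has_field_derivative_act_gexp:
  assumes Z: "Z \<in> gl_alg d n"
  shows "((\<lambda>t. act d n (gexp d n (gscale t Z)) S j) has_field_derivative
           act d n (gexp d n (gscale t0 Z)) (lie_act d n Z S) j) (at t0)"
proof (cases "j \<in> multi_idx d n")
  case True
  let ?M = "multi_idx d n" and ?I = "{1..d}"
  let ?G = "\<lambda>i. gmul d n (gexp d n (gscale t0 Z)) (gembed d n i (Z i))"
  have "((\<lambda>t. act d n (gexp d n (gscale t Z)) S j) has_field_derivative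
      (\<Sum>k\<in>?M. (\<Sum>i\<in>?I. \<Prod>m\<in>?I. ?G i m (j m) (k m)) * S k)) (at t0)"
    unfolding act_eq_sum[OF True]
    by (intro DERIV_sum DERIV_cmult_right has_field_derivative_prod_gexp[OF Z])
  moreover have "(\<Sum>k\<in>?M. (\<Sum>i\<in>?I. \<Prod>m\<in>?I. ?G i m (j m) (k m)) * S k) = (\<Sum>i\<in>?I. act d n (?G i) S j)"
    unfolding sum_distrib_right using True by (subst sum.swap) (simp add: act_eq_sum)
  moreover have "\<dots> = act d n (gexp d n (gscale t0 Z)) (lie_act d n Z S) j"
    by (simp add: lie_act_def act_sum act_gmul)
  ultimately show ?thesis
    by simp
qed (simp add: act_eq_zero_outside)

lemma act_gexp_zero:
  assumes "1 \<le> d" "j \<in> multi_idx d n"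
  shows "act d n (gexp d n (gscale 0 Z)) S j = S j"
proof -
  have "act d n (gexp d n (gscale 0 Z)) S = act d n (gone d n) S"
    by (rule act_cong_tuple) (simp add: gexp_gscale mexp_msmult_zero gone_def)
  then show ?thesis
    using assms by (simp add: act_gone)
qed

lemma gexp_in_GL_grp:
  assumes "Z \<in> gl_alg d n"
  shows "gexp d n (gscale t Z) \<in> GL_grp d n"
proof -
  have "gexp d n (gscale t Z) \<in> gl_alg d n"
    using mexp_supported by (auto simp: gl_alg_def gexp_def msupported_def)
  moreover have "\<exists>B. (\<forall>a b. (a \<ge> n i \<or> b \<ge> n i) \<longrightarrow> B a b = 0)
      \<and> mmul (n i) (gexp d n (gscale t Z) i) B = mident (n i)
      \<and> mmul (n i) B (gexp d n (gscale t Z) i) = mident (n i)" if i: "i \<in> {1..d}" for i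
    using i mexp_supported mexp_mmul_mexp_neg[of "n i" t "Z i"] mexp_mmul_mexp_neg[of "n i" "-t" "Z i"]
    by (intro exI[of _ "mexp (n i) (msmult (-t) (Z i))"]) (simp add: gexp_gscale msupported_def)
  ultimately show ?thesis
    by (simp add: GL_grp_def)
qed

lemma lie_alg_stab_eq_annihilator:
  assumes "1 \<le> d" and supp: "\<And>j. j \<notin> multi_idx d n \<Longrightarrow> S j = 0"
  shows "lie_alg d n (stab d n S) = annihilator d n S"
proof (intro set_eqI iffI)
  fix Z
  assume Z: "Z \<in> lie_alg d n (stab d n S)"
  then have Zg: "Z \<in> gl_alg d n" and const: "\<And>t. act d n (gexp d n (gscale t Z)) S = S"
    by (auto simp: lie_alg_def stab_def)
  have "lie_act d n Z S j = 0" for j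
  proof (cases "j \<in> multi_idx d n")
    case True
    have "((\<lambda>t. act d n (gexp d n (gscale t Z)) S j) has_field_derivative lie_act d n Z S j) (at 0)"
      using has_field_derivative_act_gexp[OF Zg, of S j 0] act_gexp_zero[OF \<open>1 \<le> d\<close> True] by simp
    moreover have "((\<lambda>t. act d n (gexp d n (gscale t Z)) S j) has_field_derivative 0) (at 0)"
      unfolding const by simp
    ultimately show ?thesis
      by (rule DERIV_unique)
  qed (simp add: lie_act_eq_zero_outside)
  with Zg show "Z \<in> annihilator d n S"
    by (simp add: annihilator_def fun_eq_iff)
next
  fix Z
  assume "Z \<in> annihilator d n S"
  then have Zg: "Z \<in> gl_alg d n" and ann: "lie_act d n Z S = (\<lambda>_. 0)"
    by (auto simp: annihilator_def)
  have "act d n (gexp d n (gscale t Z)) S j = S j" for t j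
  proof (cases "j \<in> multi_idx d n")
    case True
    have "((\<lambda>t. act d n (gexp d n (gscale t Z)) S j) has_field_derivative 0) (at x)" for x
      using has_field_derivative_act_gexp[OF Zg, of S j x] by (simp add: ann act_zero)
    then have "act d n (gexp d n (gscale t Z)) S j = act d n (gexp d n (gscale 0 Z)) S j"
      by (intro DERIV_isconst_all allI)
    then show ?thesis
      using act_gexp_zero[OF \<open>1 \<le> d\<close> True] by simp
  qed (simp add: act_eq_zero_outside supp)
  then show "Z \<in> lie_alg d n (stab d n S)"
    using Zg gexp_in_GL_grp[OF Zg] by (simp add: lie_alg_def stab_def fun_eq_iff)
qed

lemma lin_subspace_annihilator: "lin_subspace d n (annihilator d n S)"
proof -
  have "lie_act d n (gadd X Y) S j = lie_act d n X S j + lie_act d n Y S j" for X Y j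
    by (cases "j \<in> multi_idx d n")
       (simp_all add: lie_act_eq_sum lie_act_eq_zero_outside gadd_def algebra_simps sum.distrib)
  moreover have "lie_act d n (gscale c X) S j = c * lie_act d n X S j" for X c j
    by (cases "j \<in> multi_idx d n")
       (simp_all add: lie_act_eq_sum lie_act_eq_zero_outside gscale_def sum_distrib_left mult.assoc)
  moreover have "lie_act d n (\<lambda>i a b. 0) S j = 0" for j
    by (cases "j \<in> multi_idx d n") (simp_all add: lie_act_eq_sum lie_act_eq_zero_outside)
  ultimately show ?thesis
    by (auto simp: lin_subspace_def annihilator_def gl_alg_def gadd_def gscale_def fun_eq_iff)
qed

section \<open>Orthogonal complements\<close>

definition gdiff :: "tup \<Rightarrow> tup \<Rightarrow> tup" where
  "gdiff Z Y = (\<lambda>i a b. Z i a b - Y i a b)"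

lemma ginner_commute: "ginner d n Z Y = ginner d n Y Z"
  by (simp add: ginner_def mult.commute)

lemma ginner_gadd_left: "ginner d n (gadd Z Y) W = ginner d n Z W + ginner d n Y W"
  by (simp add: ginner_def gadd_def algebra_simps sum.distrib)

lemma ginner_gdiff_left: "ginner d n (gdiff Z Y) W = ginner d n Z W - ginner d n Y W"
  by (simp add: ginner_def gdiff_def algebra_simps sum_subtractf)

lemma ginner_gscale_left: "ginner d n (gscale c Z) W = c * ginner d n Z W"
  by (simp add: ginner_def gscale_def sum_distrib_left mult.assoc)

lemma ginner_gadd_right: "ginner d n W (gadd Z Y) = ginner d n W Z + ginner d n W Y"
  by (simp add: ginner_commute[of d n W] ginner_gadd_left)

lemma ginner_gscale_right: "ginner d n W (gscale c Z) = c * ginner d n W Z"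
  by (simp add: ginner_commute[of d n W] ginner_gscale_left)

lemma ginner_zero_right: "ginner d n W (\<lambda>i a b. 0) = 0"
  by (simp add: ginner_def)

lemma ginner_self_eq_zero:
  assumes Z: "Z \<in> gl_alg d n" and "ginner d n Z Z = 0"
  shows "Z = (\<lambda>i a b. 0)"
proof (intro ext)
  fix i a b
  show "Z i a b = 0"
  proof (cases "i \<in> {1..d} \<and> a < n i \<and> b < n i")
    case True
    have "\<forall>i\<in>{1..d}. \<forall>a\<in>{..<n i}. \<forall>b\<in>{..<n i}. Z i a b * Z i a b = 0"
      using \<open>ginner d n Z Z = 0\<close>
      by (simp add: ginner_def sum_nonneg_eq_0_iff sum_nonneg)
    with True show ?thesis
      by simp
  qed (use Z in \<open>auto simp: gl_alg_def\<close>)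
qed

lemma lin_subspace_gl_alg: "lin_subspace d n W \<Longrightarrow> X \<in> W \<Longrightarrow> X \<in> gl_alg d n"
  unfolding lin_subspace_def by blast

lemma lin_subspace_zero: "lin_subspace d n W \<Longrightarrow> (\<lambda>i a b. 0) \<in> W"
  by (simp add: lin_subspace_def)

lemma lin_subspace_gadd: "lin_subspace d n W \<Longrightarrow> X \<in> W \<Longrightarrow> Y \<in> W \<Longrightarrow> gadd X Y \<in> W"
  by (simp add: lin_subspace_def)

lemma lin_subspace_gscale: "lin_subspace d n W \<Longrightarrow> X \<in> W \<Longrightarrow> gscale c X \<in> W"
  by (simp add: lin_subspace_def)

lemma lin_subspace_gdiff:
  assumes "lin_subspace d n W" "X \<in> W" "Y \<in> W"
  shows "gdiff X Y \<in> W"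
proof -
  have "gdiff X Y = gadd X (gscale (-1) Y)"
    by (simp add: gdiff_def gadd_def gscale_def fun_eq_iff)
  then show ?thesis
    using assms by (simp add: lin_subspace_gadd lin_subspace_gscale)
qed

lemma lin_subspace_orth_compl: "lin_subspace d n (orth_compl d n W)"
proof -
  have "ginner d n (\<lambda>i a b. 0) Y = 0" for Y
    by (simp add: ginner_def)
  moreover have "X \<in> gl_alg d n \<Longrightarrow> Y \<in> gl_alg d n \<Longrightarrow> gadd X Y \<in> gl_alg d n"
    and "X \<in> gl_alg d n \<Longrightarrow> gscale c X \<in> gl_alg d n" for X Y c
    by (simp_all add: gl_alg_def gadd_def gscale_def)
  ultimately show ?thesis
    by (auto simp: lin_subspace_def orth_compl_def ginner_gadd_left ginner_gscale_left)
      (simp add: gl_alg_def)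
qed

definition has_orth_proj :: "nat \<Rightarrow> (nat \<Rightarrow> nat) \<Rightarrow> tup set \<Rightarrow> tup \<Rightarrow> bool" where
  "has_orth_proj d n W X \<longleftrightarrow> (\<exists>y\<in>W. \<forall>w\<in>W. ginner d n (gdiff X y) w = 0)"

lemma ginner_eq_zero_span:
  assumes "\<And>w. w \<in> W0 \<Longrightarrow> ginner d n Z w = 0" "ginner d n Z w1 = 0" "gdiff w (gscale l w1) \<in> W0"
  shows "ginner d n Z w = 0"
proof -
  have "w = gadd (gdiff w (gscale l w1)) (gscale l w1)"
    by (simp add: gdiff_def gadd_def gscale_def)
  then show ?thesis
    using assms by (metis ginner_gadd_right ginner_gscale_right add_0 mult_zero_right)
qed

lemma has_orth_proj_extend:
  assumes W: "lin_subspace d n W" and W0: "lin_subspace d n W0" "W0 \<subseteq> W" and w1: "w1 \<in> W"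
    and span: "\<And>w. w \<in> W \<Longrightarrow> \<exists>l. gdiff w (gscale l w1) \<in> W0"
    and proj0: "\<And>X. has_orth_proj d n W0 X"
  shows "has_orth_proj d n W X"
proof -
  obtain p where p: "p \<in> W0" and p_perp: "\<And>w. w \<in> W0 \<Longrightarrow> ginner d n (gdiff w1 p) w = 0"
    using proj0[of w1] by (auto simp: has_orth_proj_def)
  obtain y0 where y0: "y0 \<in> W0" and y0_perp: "\<And>w. w \<in> W0 \<Longrightarrow> ginner d n (gdiff X y0) w = 0"
    using proj0[of X] by (auto simp: has_orth_proj_def)
  \<comment> \<open>Gram--Schmidt: \<open>v\<close> is orthogonal to \<open>W0\<close>, and the projection of \<open>X\<close> onto \<open>W0\<close>
    is corrected along \<open>v\<close>.\<close>
  define v where "v = gdiff w1 p"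
  define c where "c = ginner d n (gdiff X y0) v / ginner d n v v"
  define y where "y = gadd y0 (gscale c v)"
  have v: "v \<in> W"
    unfolding v_def using W W0 w1 p by (blast intro: lin_subspace_gdiff)
  have y: "y \<in> W"
    unfolding y_def using W W0 v y0 by (blast intro: lin_subspace_gadd lin_subspace_gscale)
  have expand: "ginner d n (gdiff X y) w = ginner d n (gdiff X y0) w - c * ginner d n v w" for w
  proof -
    have "gdiff X y = gdiff (gdiff X y0) (gscale c v)"
      by (simp add: y_def gdiff_def gadd_def gscale_def fun_eq_iff)
    then show ?thesis
      by (simp add: ginner_gdiff_left ginner_gscale_left)
  qed
  have perp_W0: "ginner d n (gdiff X y) w = 0" if "w \<in> W0" for w
    using that by (simp add: expand y0_perp p_perp v_def)
  have perp_v: "ginner d n (gdiff X y) v = 0"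
  proof (cases "ginner d n v v = 0")
    case True
    then have "v = (\<lambda>i a b. 0)"
      using ginner_self_eq_zero lin_subspace_gl_alg[OF W v] by blast
    then show ?thesis
      by (simp add: ginner_zero_right)
  qed (simp add: expand c_def)
  have "w1 = gadd v p"
    by (simp add: v_def gdiff_def gadd_def)
  then have perp_w1: "ginner d n (gdiff X y) w1 = 0"
    using perp_v perp_W0[OF p] by (simp add: ginner_gadd_right)
  have "ginner d n (gdiff X y) w = 0" if "w \<in> W" for w
    using span[OF that] ginner_eq_zero_span[OF perp_W0 perp_w1] by blast
  with y show ?thesis
    by (auto simp: has_orth_proj_def)
qed

definition supported_on :: "(nat \<times> nat \<times> nat) set \<Rightarrow> tup \<Rightarrow> bool" where
  "supported_on F Z \<longleftrightarrow> (\<forall>i a b. (i, a, b) \<notin> F \<longrightarrow> Z i a b = 0)"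

lemma supported_on_eliminate:
  assumes "supported_on (insert (i0, a0, b0) F) w" "supported_on (insert (i0, a0, b0) F) w1"
    and "w i0 a0 b0 \<noteq> 0 \<Longrightarrow> w1 i0 a0 b0 \<noteq> 0"
  shows "supported_on F (gdiff w (gscale (w i0 a0 b0 / w1 i0 a0 b0) w1))"
  unfolding supported_on_def
proof (intro allI impI)
  fix i a b
  assume "(i, a, b) \<notin> F"
  show "gdiff w (gscale (w i0 a0 b0 / w1 i0 a0 b0) w1) i a b = 0"
  proof (cases "(i, a, b) = (i0, a0, b0)")
    case True
    then show ?thesis
      using assms(3) by (auto simp: gdiff_def gscale_def)
  next
    case False
    with \<open>(i, a, b) \<notin> F\<close> assms(1,2) have "w i a b = 0" "w1 i a b = 0"
      by (auto simp: supported_on_def)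
    then show ?thesis
      by (simp add: gdiff_def gscale_def)
  qed
qed

lemma has_orth_proj_if_supported:
  assumes "finite F" "lin_subspace d n W" "\<forall>w\<in>W. supported_on F w"
  shows "has_orth_proj d n W Z"
  using assms
proof (induction F arbitrary: W Z rule: finite_induct)
  case empty
  then have "W \<subseteq> {\<lambda>i a b. 0}"
    by (auto simp: supported_on_def fun_eq_iff)
  with lin_subspace_zero[OF empty.prems(1)] show ?case
    unfolding has_orth_proj_def by (metis ginner_zero_right singletonD subsetD)
next
  case (insert e F)
  obtain i0 a0 b0 where e: "e = (i0, a0, b0)"
    by (cases e) auto
  define W0 where "W0 = {w \<in> W. supported_on F w}"
  \<comment> \<open>If no element of \<open>W\<close> is nonzero at \<open>e\<close>, then \<open>w1 = 0\<close>, and below \<open>l = 0\<close>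
    by division by zero.\<close>
  define w1 where "w1 = (if \<exists>w\<in>W. w i0 a0 b0 \<noteq> 0 then SOME w. w \<in> W \<and> w i0 a0 b0 \<noteq> 0 else (\<lambda>i a b. 0))"
  have w1: "w1 \<in> W" and w1_nz: "\<And>w. w \<in> W \<Longrightarrow> w i0 a0 b0 \<noteq> 0 \<Longrightarrow> w1 i0 a0 b0 \<noteq> 0"
    using lin_subspace_zero[OF insert.prems(1)] someI_ex[of "\<lambda>w. w \<in> W \<and> w i0 a0 b0 \<noteq> 0"]
    by (auto simp: w1_def)
  have W0: "lin_subspace d n W0"
    using insert.prems(1) by (auto simp: W0_def lin_subspace_def supported_on_def gadd_def gscale_def)
  have span: "\<exists>l. gdiff w (gscale l w1) \<in> W0" if w: "w \<in> W" for w
  proof (intro exI)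
    let ?l = "w i0 a0 b0 / w1 i0 a0 b0"
    have "gdiff w (gscale ?l w1) \<in> W"
      using insert.prems(1) w w1 by (blast intro: lin_subspace_gdiff lin_subspace_gscale)
    moreover have "supported_on F (gdiff w (gscale ?l w1))"
      using insert.prems(2) w w1 w1_nz[OF w] e by (intro supported_on_eliminate) auto
    ultimately show "gdiff w (gscale ?l w1) \<in> W0"
      by (simp add: W0_def)
  qed
  have "has_orth_proj d n W0 Y" for Y
    using insert.IH[OF W0] by (simp add: W0_def)
  moreover have "W0 \<subseteq> W"
    by (simp add: W0_def)
  ultimately show ?case
    using has_orth_proj_extend[OF insert.prems(1) W0 _ w1 span] by blast
qed

lemma has_orth_proj_lin_subspace:
  assumes "lin_subspace d n W"
  shows "has_orth_proj d n W X"
proof (rule has_orth_proj_if_supported)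
  show "\<forall>w\<in>W. supported_on (Sigma {1..d} (\<lambda>i. {..<n i} \<times> {..<n i})) w"
    using assms by (auto simp: lin_subspace_def supported_on_def gl_alg_def)
qed (use assms in auto)

lemma orth_compl_inter:
  assumes "lin_subspace d n W"
  shows "orth_compl d n W \<inter> W = {\<lambda>i a b. 0}"
  using assms ginner_self_eq_zero lin_subspace_zero[OF assms] lin_subspace_zero[OF lin_subspace_orth_compl]
  by (auto simp: orth_compl_def)

lemma orth_compl_plus:
  assumes W: "lin_subspace d n W"
  shows "{gadd X Y | X Y. X \<in> orth_compl d n W \<and> Y \<in> W} = gl_alg d n"
proof (intro equalityI subsetI)
  fix Z
  assume "Z \<in> {gadd X Y | X Y. X \<in> orth_compl d n W \<and> Y \<in> W}"
  then show "Z \<in> gl_alg d n"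
    using lin_subspace_gl_alg[OF W] by (auto simp: orth_compl_def gl_alg_def gadd_def)
next
  fix Z
  assume Z: "Z \<in> gl_alg d n"
  obtain y where y: "y \<in> W" and perp: "\<forall>w\<in>W. ginner d n (gdiff Z y) w = 0"
    using has_orth_proj_lin_subspace[OF W] by (auto simp: has_orth_proj_def)
  have "gdiff Z y \<in> orth_compl d n W"
    using Z lin_subspace_gl_alg[OF W y] perp by (auto simp: orth_compl_def gl_alg_def gdiff_def)
  moreover have "Z = gadd (gdiff Z y) y"
    by (simp add: gadd_def gdiff_def)
  ultimately show "Z \<in> {gadd X Y | X Y. X \<in> orth_compl d n W \<and> Y \<in> W}"
    using y by blast
qed

section \<open>Adjoints and conjugation\<close>

definition tinner :: "nat \<Rightarrow> (nat \<Rightarrow> nat) \<Rightarrow> tensor \<Rightarrow> tensor \<Rightarrow> real" where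
  "tinner d n S W = (\<Sum>j\<in>multi_idx d n. S j * W j)"

definition gtranspose :: "tup \<Rightarrow> tup" where
  "gtranspose g = (\<lambda>i a b. g i b a)"

lemma gtranspose_gtranspose [simp]: "gtranspose (gtranspose g) = g"
  by (simp add: gtranspose_def)

lemma gtranspose_gembed: "gtranspose (gembed d n i M) = gembed d n i (\<lambda>a b. M b a)"
  by (auto simp: gtranspose_def gembed_def mident_def fun_eq_iff)

lemma act_adjoint: "tinner d n (act d n g S) W = tinner d n S (act d n (gtranspose g) W)"
proof -
  let ?M = "multi_idx d n"
  have "tinner d n (act d n g S) W = (\<Sum>j\<in>?M. \<Sum>k\<in>?M. S k * ((\<Prod>i\<in>{1..d}. g i (j i) (k i)) * W j))"
    by (simp add: tinner_def act_def sum_distrib_left sum_distrib_right mult_ac)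
  also have "\<dots> = (\<Sum>k\<in>?M. \<Sum>j\<in>?M. S k * ((\<Prod>i\<in>{1..d}. g i (j i) (k i)) * W j))"
    by (rule sum.swap)
  also have "\<dots> = tinner d n S (act d n (gtranspose g) W)"
    by (simp add: tinner_def act_def sum_distrib_left gtranspose_def)
  finally show ?thesis .
qed

lemma tinner_sum_left: "finite X \<Longrightarrow> tinner d n (\<lambda>j. \<Sum>x\<in>X. F x j) W = (\<Sum>x\<in>X. tinner d n (F x) W)"
  by (simp add: tinner_def sum_distrib_right sum.swap[of _ X])

lemma tinner_sum_right: "finite X \<Longrightarrow> tinner d n W (\<lambda>j. \<Sum>x\<in>X. F x j) = (\<Sum>x\<in>X. tinner d n W (F x))"
  by (simp add: tinner_def sum_distrib_left sum.swap[of _ X])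

lemma lie_act_adjoint: "tinner d n (lie_act d n Z S) W = tinner d n S (lie_act d n (gtranspose Z) W)"
proof -
  have "tinner d n (lie_act d n Z S) W = (\<Sum>i\<in>{1..d}. tinner d n (act d n (gembed d n i (Z i)) S) W)"
    unfolding lie_act_def by (simp add: tinner_sum_left)
  also have "\<dots> = (\<Sum>i\<in>{1..d}. tinner d n S (act d n (gembed d n i (gtranspose Z i)) W))"
    by (simp add: act_adjoint gtranspose_gembed) (simp add: gtranspose_def)
  also have "\<dots> = tinner d n S (lie_act d n (gtranspose Z) W)"
    unfolding lie_act_def by (simp add: tinner_sum_right)
  finally show ?thesis .
qed

lemma tinner_self_eq_zero: "tinner d n U U = 0 \<Longrightarrow> j \<in> multi_idx d n \<Longrightarrow> U j = 0"
  using finite_multi_idx[of d n] by (simp add: tinner_def sum_nonneg_eq_0_iff)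

definition gbracket :: "nat \<Rightarrow> (nat \<Rightarrow> nat) \<Rightarrow> tup \<Rightarrow> tup \<Rightarrow> tup" where
  "gbracket d n Y Z = (\<lambda>i a b. mmul (n i) (Y i) (Z i) a b - mmul (n i) (Z i) (Y i) a b)"

lemma act_gmul_gembed_commute:
  "i \<noteq> m \<Longrightarrow> act d n (gmul d n (gembed d n i A) (gembed d n m B)) S
    = act d n (gmul d n (gembed d n m B) (gembed d n i A)) S"
  by (rule act_cong_tuple) (auto simp: gmul_def gembed_def mmul_mident_left_eq mmul_mident_right_eq)

lemma act_gmul_gembed_same:
  "act d n (gmul d n (gembed d n i A) (gembed d n i B)) S = act d n (gembed d n i (mmul (n i) A B)) S"
  by (rule act_cong_tuple) (auto simp: gmul_def gembed_def mmul_mident_left_eq mmul_mident_right_eq)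

lemma act_gembed_diff:
  assumes "i \<in> {1..d}"
  shows "act d n (gembed d n i (\<lambda>a b. A a b - B a b)) S j
    = act d n (gembed d n i A) S j - act d n (gembed d n i B) S j"
  using assms
  by (cases "j \<in> multi_idx d n") (simp_all add: act_gembed act_eq_zero_outside algebra_simps sum_subtractf)

lemma lie_act_lie_act:
  "lie_act d n Y (lie_act d n Z S) j
    = (\<Sum>i\<in>{1..d}. \<Sum>m\<in>{1..d}. act d n (gmul d n (gembed d n i (Y i)) (gembed d n m (Z m))) S j)"
  unfolding lie_act_def by (simp add: act_sum act_gmul)

lemma lie_act_commutator:
  "lie_act d n Y (lie_act d n Z S) j - lie_act d n Z (lie_act d n Y S) j = lie_act d n (gbracket d n Y Z) S j"
proof -
  let ?I = "{1..d}"
  let ?Q = "\<lambda>i m. act d n (gmul d n (gembed d n i (Y i)) (gembed d n m (Z m))) S j"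
  let ?R = "\<lambda>i m. act d n (gmul d n (gembed d n i (Z i)) (gembed d n m (Y m))) S j"
  have "lie_act d n Z (lie_act d n Y S) j = (\<Sum>i\<in>?I. \<Sum>m\<in>?I. ?R m i)"
    unfolding lie_act_lie_act by (rule sum.swap)
  then have "lie_act d n Y (lie_act d n Z S) j - lie_act d n Z (lie_act d n Y S) j
      = (\<Sum>i\<in>?I. \<Sum>m\<in>?I. ?Q i m - ?R m i)"
    by (simp only: lie_act_lie_act sum_subtractf)
  also have "\<dots> = (\<Sum>i\<in>?I. ?Q i i - ?R i i)"
  proof (intro sum.cong refl)
    fix i
    assume "i \<in> ?I"
    have "(\<Sum>m\<in>?I. ?Q i m - ?R m i) = (\<Sum>m\<in>?I. if m = i then ?Q i i - ?R i i else 0)"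
      using act_gmul_gembed_commute[of i _ d n "Y i" _ S] by (intro sum.cong) auto
    with \<open>i \<in> ?I\<close> show "(\<Sum>m\<in>?I. ?Q i m - ?R m i) = ?Q i i - ?R i i"
      by simp
  qed
  also have "\<dots> = lie_act d n (gbracket d n Y Z) S j"
    by (simp add: lie_act_def act_gmul_gembed_same gbracket_def act_gembed_diff)
  finally show ?thesis .
qed

lemma act_lie_act:
  assumes inv: "\<And>i. i \<in> {1..d} \<Longrightarrow> mmul (n i) (g' i) (g i) = mident (n i)"
  shows "act d n g (lie_act d n X S) = lie_act d n (\<lambda>i. mmul (n i) (mmul (n i) (g i) (X i)) (g' i)) (act d n g S)"
proof -
  have "act d n (gmul d n g (gembed d n i (X i))) S
      = act d n (gmul d n (gembed d n i (mmul (n i) (mmul (n i) (g i) (X i)) (g' i))) g) S"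
    if i: "i \<in> {1..d}" for i
  proof (rule act_cong_tuple)
    fix m a b
    assume "m \<in> {1..d}" "a < n m" "b < n m"
    moreover have "mmul (n i) (mmul (n i) (mmul (n i) (g i) (X i)) (g' i)) (g i) = mmul (n i) (g i) (X i)"
      by (subst mmul_assoc) (simp add: inv[OF i] mmul_mident_right mmul_supported)
    ultimately show "gmul d n g (gembed d n i (X i)) m a b
        = gmul d n (gembed d n i (mmul (n i) (mmul (n i) (g i) (X i)) (g' i))) g m a b"
      by (cases "m = i") (simp_all add: gmul_def gembed_def mmul_mident_left_eq mmul_mident_right_eq)
  qed
  then have "act d n g (act d n (gembed d n i (X i)) S)
      = act d n (gembed d n i (mmul (n i) (mmul (n i) (g i) (X i)) (g' i))) (act d n g S)"
    if "i \<in> {1..d}" for i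
    using that by (simp only: act_gmul)
  then show ?thesis
    by (simp add: lie_act_def act_sum fun_eq_iff)
qed

lemma trace_mmul_commute: "(\<Sum>c<m. mmul m A B c c) = (\<Sum>c<m. mmul m B A c c)"
proof -
  have "(\<Sum>c<m. mmul m A B c c) = (\<Sum>c<m. \<Sum>e<m. B e c * A c e)"
    by (simp add: mmul_eq_sum mult.commute)
  also have "\<dots> = (\<Sum>c<m. mmul m B A c c)"
    by (subst sum.swap) (simp add: mmul_eq_sum)
  finally show ?thesis .
qed

lemma lie_act_zero_tensor: "lie_act d n Z (\<lambda>_. 0) = (\<lambda>_. 0)"
  by (simp add: lie_act_def act_zero)

lemma tinner_lie_act_gtranspose_self:
  assumes "lie_act d n Y S = (\<lambda>_. 0)"
  shows "tinner d n (lie_act d n (gtranspose Y) S) (lie_act d n (gtranspose Y) S)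
    = tinner d n S (lie_act d n (gbracket d n Y (gtranspose Y)) S)"
proof -
  have "lie_act d n Y (lie_act d n (gtranspose Y) S) = lie_act d n (gbracket d n Y (gtranspose Y)) S"
    using lie_act_commutator[of d n Y "gtranspose Y" S]
    by (simp add: assms lie_act_zero_tensor fun_eq_iff)
  then show ?thesis
    by (simp add: lie_act_adjoint)
qed

lemma gtranspose_in_annihilator:
  assumes trace: "\<And>i. i \<in> {1..d} \<Longrightarrow>
      \<exists>\<mu>. \<forall>M. tinner d n S (act d n (gembed d n i M) S) = \<mu> * (\<Sum>c<n i. M c c)"
    and Y: "Y \<in> annihilator d n S"
  shows "gtranspose Y \<in> annihilator d n S"
proof -
  let ?U = "lie_act d n (gtranspose Y) S"
  have "tinner d n ?U ?U
      = (\<Sum>i\<in>{1..d}. tinner d n S (act d n (gembed d n i (gbracket d n Y (gtranspose Y) i)) S))"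
  proof -
    have YS: "lie_act d n Y S = (\<lambda>_. 0)"
      using Y by (simp add: annihilator_def)
    show ?thesis
      unfolding tinner_lie_act_gtranspose_self[OF YS] by (simp add: lie_act_def tinner_sum_right)
  qed
  also have "\<dots> = 0"
  proof (intro sum.neutral ballI)
    fix i
    assume "i \<in> {1..d}"
    then obtain \<mu> where "\<And>M. tinner d n S (act d n (gembed d n i M) S) = \<mu> * (\<Sum>c<n i. M c c)"
      using trace by blast
    then show "tinner d n S (act d n (gembed d n i (gbracket d n Y (gtranspose Y) i)) S) = 0"
      using trace_mmul_commute[of "n i" "Y i" "gtranspose Y i"]
      by (simp add: gbracket_def sum_subtractf)
  qed
  finally have "?U j = 0" for j
    by (cases "j \<in> multi_idx d n") (simp_all add: tinner_self_eq_zero lie_act_eq_zero_outside)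
  moreover have "gtranspose Y \<in> gl_alg d n"
    using Y by (auto simp: annihilator_def gl_alg_def gtranspose_def)
  ultimately show ?thesis
    by (simp add: annihilator_def fun_eq_iff)
qed

lemma minv_props:
  assumes "h \<in> GL_grp d n" "i \<in> {1..d}"
  shows "msupported (n i) (minv (n i) (h i))"
    and "mmul (n i) (h i) (minv (n i) (h i)) = mident (n i)"
    and "mmul (n i) (minv (n i) (h i)) (h i) = mident (n i)"
proof -
  have "\<exists>B. (\<forall>a b. (a \<ge> n i \<or> b \<ge> n i) \<longrightarrow> B a b = 0)
      \<and> mmul (n i) (h i) B = mident (n i) \<and> mmul (n i) B (h i) = mident (n i)"
    using assms by (simp add: GL_grp_def)
  from someI_ex[OF this, folded minv_def]
  show "msupported (n i) (minv (n i) (h i))"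
    and "mmul (n i) (h i) (minv (n i) (h i)) = mident (n i)"
    and "mmul (n i) (minv (n i) (h i)) (h i) = mident (n i)"
    by (simp_all add: msupported_def)
qed

lemma minv_unique:
  assumes B: "msupported m B" and AB: "mmul m A B = mident m" and BA: "mmul m B A = mident m"
  shows "minv m A = B"
proof -
  have "\<exists>B. (\<forall>a b. (a \<ge> m \<or> b \<ge> m) \<longrightarrow> B a b = 0) \<and> mmul m A B = mident m \<and> mmul m B A = mident m"
    using assms by (auto simp: msupported_def)
  from someI_ex[OF this, folded minv_def]
  have C: "msupported m (minv m A)" "mmul m (minv m A) A = mident m"
    by (simp_all add: msupported_def)
  have "minv m A = mmul m (minv m A) (mmul m A B)"
    by (simp add: AB mmul_mident_right C)
  also have "\<dots> = B"
    by (simp add: C B mmul_mident_left flip: mmul_assoc)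
  finally show ?thesis .
qed

definition ginv :: "nat \<Rightarrow> (nat \<Rightarrow> nat) \<Rightarrow> tup \<Rightarrow> tup" where
  "ginv d n h = (\<lambda>i. if i \<in> {1..d} then minv (n i) (h i) else (\<lambda>a b. 0))"

lemma minv_ginv:
  assumes "h \<in> GL_grp d n" "i \<in> {1..d}"
  shows "minv (n i) (ginv d n h i) = h i"
proof -
  have "msupported (n i) (h i)"
    using assms by (simp add: GL_grp_def gl_alg_msupported[OF _ assms(2)])
  with minv_props[OF assms] show ?thesis
    using assms(2) unfolding ginv_def by (simp add: minv_unique[of "n i" "h i"])
qed

lemma ginv_in_stab:
  assumes "1 \<le> d" and supp: "\<And>j. j \<notin> multi_idx d n \<Longrightarrow> S j = 0" and h: "h \<in> stab d n S"
  shows "ginv d n h \<in> stab d n S"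
proof -
  have hG: "h \<in> GL_grp d n" and hS: "act d n h S = S"
    using h by (auto simp: stab_def)
  have "ginv d n h \<in> gl_alg d n"
    using minv_props(1)[OF hG] by (auto simp: gl_alg_def ginv_def msupported_def)
  moreover have "\<exists>B. (\<forall>a b. (a \<ge> n i \<or> b \<ge> n i) \<longrightarrow> B a b = 0)
      \<and> mmul (n i) (ginv d n h i) B = mident (n i) \<and> mmul (n i) B (ginv d n h i) = mident (n i)"
    if i: "i \<in> {1..d}" for i
    using i hG minv_props[OF hG i]
    by (intro exI[of _ "h i"]) (auto simp: ginv_def GL_grp_def gl_alg_def)
  ultimately have "ginv d n h \<in> GL_grp d n"
    by (simp add: GL_grp_def)
  moreover have "act d n (ginv d n h) S = S"
  proof -
    have "act d n (ginv d n h) S = act d n (gmul d n (ginv d n h) h) S"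
      by (subst hS[symmetric]) (simp add: act_gmul)
    also have "\<dots> = act d n (gone d n) S"
      by (rule act_cong_tuple) (simp add: gmul_def ginv_def gone_def minv_props[OF hG])
    also have "\<dots> = S"
    proof
      fix j
      show "act d n (gone d n) S j = S j"
        using assms by (cases "j \<in> multi_idx d n") (simp_all add: act_gone act_eq_zero_outside)
    qed
    finally show ?thesis .
  qed
  ultimately show ?thesis
    by (simp add: stab_def)
qed

lemma lie_act_cong: "(\<And>i. i \<in> {1..d} \<Longrightarrow> Z i = Z' i) \<Longrightarrow> lie_act d n Z S = lie_act d n Z' S"
  by (simp add: lie_act_def)

lemma gconj_in_gl_alg: "gconj d n h Z \<in> gl_alg d n"
  by (auto simp: gl_alg_def gconj_def mmul_eq_zero_outside)

lemma gconj_in_annihilator: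
  assumes h: "h \<in> stab d n S" and Y: "Y \<in> annihilator d n S"
  shows "gconj d n h Y \<in> annihilator d n S"
proof -
  have hG: "h \<in> GL_grp d n" and hS: "act d n h S = S"
    using h by (auto simp: stab_def)
  have "lie_act d n (gconj d n h Y) S
      = lie_act d n (\<lambda>i. mmul (n i) (mmul (n i) (h i) (Y i)) (minv (n i) (h i))) S"
    by (rule lie_act_cong) (simp add: gconj_def)
  also have "\<dots> = lie_act d n (\<lambda>i. mmul (n i) (mmul (n i) (h i) (Y i)) (minv (n i) (h i))) (act d n h S)"
    by (simp only: hS)
  also have "\<dots> = act d n h (lie_act d n Y S)"
    by (rule act_lie_act[symmetric]) (rule minv_props(3)[OF hG])
  also have "\<dots> = (\<lambda>_. 0)"
    using Y by (simp add: annihilator_def act_zero)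
  finally show ?thesis
    by (simp add: annihilator_def gconj_in_gl_alg)
qed

definition mtranspose :: "mat \<Rightarrow> mat" where
  "mtranspose A = (\<lambda>a b. A b a)"

definition frob :: "nat \<Rightarrow> mat \<Rightarrow> mat \<Rightarrow> real" where
  "frob m A B = (\<Sum>a<m. \<Sum>b<m. A a b * B a b)"

lemma ginner_eq_sum_frob: "ginner d n Z W = (\<Sum>i\<in>{1..d}. frob (n i) (Z i) (W i))"
  by (simp add: ginner_def frob_def)

lemma mtranspose_mmul: "mtranspose (mmul m A B) = mmul m (mtranspose B) (mtranspose A)"
  by (auto simp: mtranspose_def fun_eq_iff mmul_def mult.commute)

lemma frob_mmul_eq_sum: "frob m (mmul m A B) C = (\<Sum>a<m. \<Sum>c<m. \<Sum>b<m. A a c * B c b * C a b)"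
proof -
  have "frob m (mmul m A B) C = (\<Sum>a<m. \<Sum>b<m. \<Sum>c<m. A a c * B c b * C a b)"
    by (simp add: frob_def mmul_eq_sum sum_distrib_right)
  also have "\<dots> = (\<Sum>a<m. \<Sum>c<m. \<Sum>b<m. A a c * B c b * C a b)"
    by (intro sum.cong refl sum.swap)
  finally show ?thesis .
qed

lemma frob_mmul_left: "frob m (mmul m A B) C = frob m B (mmul m (mtranspose A) C)"
proof -
  have "frob m (mmul m A B) C = (\<Sum>c<m. \<Sum>a<m. \<Sum>b<m. A a c * B c b * C a b)"
    unfolding frob_mmul_eq_sum by (rule sum.swap)
  also have "\<dots> = (\<Sum>c<m. \<Sum>b<m. \<Sum>a<m. A a c * B c b * C a b)"
    by (intro sum.cong refl sum.swap)
  also have "\<dots> = frob m B (mmul m (mtranspose A) C)"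
    by (simp add: frob_def mmul_eq_sum mtranspose_def sum_distrib_left mult_ac)
  finally show ?thesis .
qed

lemma frob_mmul_right: "frob m (mmul m A B) C = frob m A (mmul m C (mtranspose B))"
  unfolding frob_mmul_eq_sum
  by (simp add: frob_def mmul_eq_sum mtranspose_def sum_distrib_left mult_ac)

lemma ginner_gconj:
  assumes h: "h \<in> GL_grp d n"
  shows "ginner d n (gconj d n h Z) Y = ginner d n Z (gtranspose (gconj d n (ginv d n h) (gtranspose Y)))"
  unfolding ginner_eq_sum_frob
proof (rule sum.cong[OF refl])
  fix i
  assume i: "i \<in> {1..d}"
  let ?h = "h i" and ?h' = "minv (n i) (h i)"
  have "frob (n i) (gconj d n h Z i) (Y i) = frob (n i) (mmul (n i) (mmul (n i) ?h (Z i)) ?h') (Y i)"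
    using i by (simp add: gconj_def)
  also have "\<dots> = frob (n i) (Z i) (mmul (n i) (mtranspose ?h) (mmul (n i) (Y i) (mtranspose ?h')))"
    by (subst frob_mmul_right) (rule frob_mmul_left)
  also have "mmul (n i) (mtranspose ?h) (mmul (n i) (Y i) (mtranspose ?h'))
      = gtranspose (gconj d n (ginv d n h) (gtranspose Y)) i"
  proof -
    have "minv (n i) ?h' = ?h"
      using minv_ginv[OF h i] i by (simp add: ginv_def)
    then have "gtranspose (gconj d n (ginv d n h) (gtranspose Y)) i
        = mtranspose (mmul (n i) (mmul (n i) ?h' (mtranspose (Y i))) ?h)"
      using i by (simp add: gconj_def ginv_def gtranspose_def mtranspose_def)
    then show ?thesis
      by (simp add: mtranspose_mmul mmul_assoc) (simp add: mtranspose_def)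
  qed
  finally show "frob (n i) (gconj d n h Z i) (Y i) = frob (n i) (Z i) (gtranspose (gconj d n (ginv d n h) (gtranspose Y)) i)" .
qed

section \<open>A criterion for reductivity\<close>

locale transpose_closed_stabilizer =
  fixes d :: nat and n :: "nat \<Rightarrow> nat" and S :: tensor
  assumes d_pos: "1 \<le> d"
    and supp: "\<And>j. j \<notin> multi_idx d n \<Longrightarrow> S j = 0"
    and transpose_closed: "\<And>Y. Y \<in> annihilator d n S \<Longrightarrow> gtranspose Y \<in> annihilator d n S"
begin

lemma gconj_orth_compl_annihilator:
  assumes h: "h \<in> stab d n S" and Z: "Z \<in> orth_compl d n (annihilator d n S)"
  shows "gconj d n h Z \<in> orth_compl d n (annihilator d n S)"
proof -
  have hG: "h \<in> GL_grp d n"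
    using h by (simp add: stab_def)
  have "ginner d n (gconj d n h Z) Y = 0" if Y: "Y \<in> annihilator d n S" for Y
  proof -
    have "gconj d n (ginv d n h) (gtranspose Y) \<in> annihilator d n S"
      using ginv_in_stab[OF d_pos supp h] transpose_closed[OF Y] by (rule gconj_in_annihilator)
    then have "gtranspose (gconj d n (ginv d n h) (gtranspose Y)) \<in> annihilator d n S"
      by (rule transpose_closed)
    then show ?thesis
      using Z by (simp add: ginner_gconj[OF hG] orth_compl_def)
  qed
  then show ?thesis
    by (simp add: orth_compl_def gconj_in_gl_alg)
qed

lemma reductive_stab: "reductive d n (stab d n S)"
proof -
  let ?P = "orth_compl d n (annihilator d n S)"
  have "lin_subspace d n ?P"
    by (rule lin_subspace_orth_compl)
  moreover have "?P \<inter> annihilator d n S = {\<lambda>i a b. 0}"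
    by (rule orth_compl_inter[OF lin_subspace_annihilator])
  moreover have "{gadd X Y |X Y. X \<in> ?P \<and> Y \<in> annihilator d n S} = gl_alg d n"
    by (rule orth_compl_plus[OF lin_subspace_annihilator])
  moreover have "\<forall>h\<in>stab d n S. gconj d n h ` ?P \<subseteq> ?P"
    using gconj_orth_compl_annihilator by blast
  moreover have "lie_alg d n (stab d n S) = annihilator d n S"
    by (rule lie_alg_stab_eq_annihilator[OF d_pos supp])
  ultimately show ?thesis
    unfolding reductive_def by (intro exI[of _ ?P]) simp
qed

end

section \<open>The matrix product state tensor\<close>

lemma sum_mult_add_index:
  fixes w :: "nat \<Rightarrow> real"
  shows "(\<Sum>a<p. \<Sum>b<q. w (a * q + b)) = (\<Sum>c<p * q. w c)"
proof -
  have "(\<Sum>b<q. w (a * q + b)) = sum w {a * q..<a * q + q}" for a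
    using sum.atLeastLessThan_shift_0[of w "a * q" "a * q + q"] by (simp add: lessThan_atLeast0 add.commute)
  then show ?thesis
    using sum.nat_group[of w q p] by (simp add: mult.commute)
qed

locale mps_tensor =
  fixes d :: nat and n s :: "nat \<Rightarrow> nat"
  assumes d3: "d \<ge> 3"
    and n2: "\<forall>i\<in>{1..d}. n i \<ge> 2"
    and s_pos: "\<forall>i\<in>{1..d-1}. s i > 0"
    and s0: "s 0 = 1" and sd: "s d = 1"
    and s_le_n: "\<forall>i\<in>{1..d}. s (i - 1) * s i \<le> n i"
begin

abbreviation "A \<equiv> alpha_set d s"
abbreviation "T \<equiv> T_mps d s"
abbreviation "mps \<equiv> mps_index d s"

lemma alpha_set_eq_index_box: "A = index_box {0..d} s"
proof -
  have "((i \<in> {1..d-1} \<longrightarrow> k i < s i) \<and> (i \<notin> {1..d-1} \<longrightarrow> k i = 0))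
      \<longleftrightarrow> ((i \<in> {0..d} \<longrightarrow> k i < s i) \<and> (i \<notin> {0..d} \<longrightarrow> k i = 0))" for k i
    using s0 sd d3 by (cases "i = 0 \<or> i = d") auto
  then show ?thesis
    by (simp only: alpha_set_def index_box_def)
qed

lemma alpha_less: "\<alpha> \<in> A \<Longrightarrow> i \<le> d \<Longrightarrow> \<alpha> i < s i"
  by (simp add: alpha_set_eq_index_box index_box_def)

lemma alpha_outside: "\<alpha> \<in> A \<Longrightarrow> i \<notin> {1..d-1} \<Longrightarrow> \<alpha> i = 0"
  by (simp add: alpha_set_def)

lemma s_pos_le:
  assumes "i \<le> d"
  shows "0 < s i"
proof (cases "i \<in> {1..d-1}")
  case False
  with assms have "i = 0 \<or> i = d"
    by auto
  then show ?thesis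
    using s0 sd by auto
qed (use s_pos in blast)

lemma mps_index_eq: "\<alpha> \<in> A \<Longrightarrow> i \<in> {1..d} \<Longrightarrow> mps \<alpha> i = \<alpha> (i - 1) * s i + \<alpha> i"
  using d3 sd alpha_outside[of \<alpha> 0] alpha_outside[of \<alpha> d]
  by (auto simp: mps_index_def iota_def)

lemma mps_index_outside: "i \<notin> {1..d} \<Longrightarrow> mps \<alpha> i = 0"
  using d3 by (auto simp: mps_index_def)

lemma mps_index_less: "\<alpha> \<in> A \<Longrightarrow> i \<in> {1..d} \<Longrightarrow> mps \<alpha> i < s (i - 1) * s i"
proof -
  assume \<alpha>: "\<alpha> \<in> A" and i: "i \<in> {1..d}"
  have "\<alpha> (i - 1) * s i + \<alpha> i < (\<alpha> (i - 1) + 1) * s i"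
    using alpha_less[OF \<alpha>, of i] i by simp
  also have "\<dots> \<le> s (i - 1) * s i"
  proof (rule mult_right_mono)
    have "\<alpha> (i - 1) < s (i - 1)"
      by (rule alpha_less[OF \<alpha>]) (use i in auto)
    then show "\<alpha> (i - 1) + 1 \<le> s (i - 1)"
      by simp
  qed simp
  finally show ?thesis
    using mps_index_eq[OF \<alpha> i] by simp
qed

lemma mps_index_in_multi_idx:
  assumes "\<alpha> \<in> A"
  shows "mps \<alpha> \<in> multi_idx d n"
proof -
  have "mps \<alpha> i < n i" if "i \<in> {1..d}" for i
    using mps_index_less[OF assms that] s_le_n that by (meson less_le_trans)
  then show ?thesis
    by (simp add: multi_idx_def mps_index_outside)
qed

text \<open>An index tuple is recovered from all but one slot of its image: slot \<open>m\<close> of \<open>mps \<alpha>\<close>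
  encodes \<open>\<alpha>\<^sub>m\<close> as its remainder modulo \<open>s\<^sub>m\<close>, and slot \<open>m + 1\<close> encodes it as its
  quotient by \<open>s\<^sub>m\<^sub>+\<^sub>1\<close>.\<close>

lemma mps_index_determined:
  assumes \<alpha>: "\<alpha> \<in> A" and \<beta>: "\<beta> \<in> A" and i: "i \<in> {1..d}"
    and agree: "\<And>m. m \<in> {1..d} \<Longrightarrow> m \<noteq> i \<Longrightarrow> mps \<alpha> m = mps \<beta> m"
  shows "\<alpha> = \<beta>"
proof
  fix m
  show "\<alpha> m = \<beta> m"
  proof (cases "m \<in> {1..d-1}")
    case False
    then show ?thesis
      using \<alpha> \<beta> by (simp add: alpha_outside)
  next
    case m: True
    show ?thesis
    proof (cases "m = i")
      case False
      have "m \<in> {1..d}"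
        using m by auto
      then have "mps \<alpha> m mod s m = \<alpha> m" "mps \<beta> m mod s m = \<beta> m"
        using mps_index_eq alpha_less \<alpha> \<beta> by auto
      then show ?thesis
        using agree[OF \<open>m \<in> {1..d}\<close> False] by simp
    next
      case True
      have "m + 1 \<in> {1..d}" "0 < s (m + 1)"
        using m s_pos_le[of "m + 1"] by auto
      then have "mps \<alpha> (m + 1) div s (m + 1) = \<alpha> m" "mps \<beta> (m + 1) div s (m + 1) = \<beta> m"
        using mps_index_eq alpha_less \<alpha> \<beta> by auto
      then show ?thesis
        using agree[OF \<open>m + 1 \<in> {1..d}\<close>] True by simp
    qed
  qed
qed

lemma inj_on_mps_index: "inj_on mps A"
  using d3 by (intro inj_onI mps_index_determined[of _ _ 1]) auto

lemma finite_alpha_set: "finite A"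
  by (simp add: alpha_set_eq_index_box finite_index_box)

lemma T_mps_eq: "T j = (if j \<in> mps ` A then 1 else 0)"
proof -
  have "T j = (\<Sum>x\<in>mps ` A. if x = j then 1 else 0)"
    by (simp add: T_mps_def basis_tensor_def sum.reindex[OF inj_on_mps_index] eq_commute)
  then show ?thesis
    using finite_alpha_set by simp
qed

lemma T_mps_eq_zero_if_large: "i \<in> {1..d} \<Longrightarrow> s (i - 1) * s i \<le> j i \<Longrightarrow> T j = 0"
  unfolding T_mps_eq using mps_index_less by (auto simp: not_less[symmetric])

lemma T_mps_outside: "j \<notin> multi_idx d n \<Longrightarrow> T j = 0"
  using mps_index_in_multi_idx by (auto simp: T_mps_eq)

lemma T_mps_update:
  assumes \<alpha>: "\<alpha> \<in> A" and i: "i \<in> {1..d}"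
  shows "T ((mps \<alpha>)(i := c)) = (if c = mps \<alpha> i then 1 else 0)"
proof (cases "(mps \<alpha>)(i := c) \<in> mps ` A")
  case True
  then obtain \<beta> where \<beta>: "\<beta> \<in> A" and eq: "(mps \<alpha>)(i := c) = mps \<beta>"
    by auto
  have "\<alpha> = \<beta>"
  proof (rule mps_index_determined[OF \<alpha> \<beta> i])
    fix m
    assume "m \<in> {1..d}" "m \<noteq> i"
    then show "mps \<alpha> m = mps \<beta> m"
      using fun_cong[OF eq, of m] by simp
  qed
  then have "c = mps \<alpha> i"
    using fun_cong[OF eq, of i] by simp
  then show ?thesis
    using True by (simp add: T_mps_eq)
next
  case False
  then have "c \<noteq> mps \<alpha> i"
    using \<alpha> by (metis fun_upd_triv image_eqI)
  with False show ?thesis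
    by (simp add: T_mps_eq)
qed

lemma sum_alpha_set_slot_pair:
  assumes i: "i \<in> {1..d}"
  shows "(\<Sum>\<alpha>\<in>A. w (\<alpha> (i - 1) * s i + \<alpha> i))
    = real (card (index_box ({0..d} - {i - 1} - {i}) s)) * (\<Sum>c<s (i - 1) * s i. w c)"
proof -
  let ?J = "{0..d} - {i - 1} - {i}" and ?f = "\<lambda>\<alpha>. w (\<alpha> (i - 1) * s i + \<alpha> i)"
  have "(\<Sum>\<alpha>\<in>A. ?f \<alpha>) = (\<Sum>a<s (i - 1). \<Sum>k\<in>index_box ({0..d} - {i - 1}) s. ?f (k(i - 1 := a)))"
    unfolding alpha_set_eq_index_box by (rule sum_index_box_remove) (use i in auto)
  also have "\<dots> = (\<Sum>a<s (i - 1). \<Sum>b<s i. \<Sum>k\<in>index_box ?J s. ?f ((k(i := b))(i - 1 := a)))"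
    by (intro sum.cong refl sum_index_box_remove) (use i in auto)
  also have "\<dots> = (\<Sum>a<s (i - 1). \<Sum>b<s i. real (card (index_box ?J s)) * w (a * s i + b))"
  proof -
    have "i \<noteq> i - 1"
      using i by auto
    then show ?thesis
      by simp
  qed
  also have "\<dots> = real (card (index_box ?J s)) * (\<Sum>c<s (i - 1) * s i. w c)"
    by (simp add: sum_distrib_left[symmetric] sum_mult_add_index)
  finally show ?thesis .
qed

lemma tinner_T_mps_act_gembed:
  assumes i: "i \<in> {1..d}" and n_eq: "n i = s (i - 1) * s i"
  shows "tinner d n T (act d n (gembed d n i M) T)
    = real (card (index_box ({0..d} - {i - 1} - {i}) s)) * (\<Sum>c<n i. M c c)"
proof -
  let ?F = "\<lambda>j. \<Sum>c<n i. M (j i) c * T (j(i := c))"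
  have "tinner d n T (act d n (gembed d n i M) T) = (\<Sum>j\<in>multi_idx d n. if j \<in> mps ` A then ?F j else 0)"
    unfolding tinner_def by (intro sum.cong refl) (simp add: act_gembed[OF _ i] T_mps_eq)
  also have "\<dots> = (\<Sum>j\<in>mps ` A. ?F j)"
    using mps_index_in_multi_idx by (simp add: sum.If_cases finite_multi_idx Int_absorb1 image_subset_iff)
  also have "\<dots> = (\<Sum>\<alpha>\<in>A. ?F (mps \<alpha>))"
    by (simp add: sum.reindex[OF inj_on_mps_index])
  also have "\<dots> = (\<Sum>\<alpha>\<in>A. M (\<alpha> (i - 1) * s i + \<alpha> i) (\<alpha> (i - 1) * s i + \<alpha> i))"
  proof (intro sum.cong refl)
    fix \<alpha>
    assume \<alpha>: "\<alpha> \<in> A"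
    have "mps \<alpha> i < n i"
      using mps_index_in_multi_idx[OF \<alpha>] i by (simp add: multi_idx_less)
    then show "?F (mps \<alpha>) = M (\<alpha> (i - 1) * s i + \<alpha> i) (\<alpha> (i - 1) * s i + \<alpha> i)"
      by (simp add: T_mps_update[OF \<alpha> i] mps_index_eq[OF \<alpha> i] if_distrib[of "\<lambda>x. _ * x"] cong: if_cong)
  qed
  also have "\<dots> = real (card (index_box ({0..d} - {i - 1} - {i}) s)) * (\<Sum>c<n i. M c c)"
    using sum_alpha_set_slot_pair[OF i, of "\<lambda>c. M c c"] n_eq by simp
  finally show ?thesis .
qed

lemma gtranspose_in_annihilator_T_mps:
  assumes "\<forall>i\<in>{1..d}. n i = s (i - 1) * s i" and "Y \<in> annihilator d n T"
  shows "gtranspose Y \<in> annihilator d n T"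
  using assms tinner_T_mps_act_gembed by (intro gtranspose_in_annihilator) blast+

lemma lie_alg_stab_T_mps: "lie_alg d n (stab d n T) = annihilator d n T"
  using d3 T_mps_outside by (intro lie_alg_stab_eq_annihilator) auto

lemma transpose_closed_stabilizer_T_mps:
  assumes "\<forall>i\<in>{1..d}. n i = s (i - 1) * s i"
  shows "transpose_closed_stabilizer d n T"
  using d3 T_mps_outside gtranspose_in_annihilator_T_mps[OF assms]
  by unfold_locales auto

end

section \<open>Non-reductivity when some n_i exceeds s_{i-1} s_i\<close>

definition munipotent :: "nat \<Rightarrow> nat \<Rightarrow> real \<Rightarrow> mat" where
  "munipotent m r c = (\<lambda>a b. mident m a b + (if a = 0 \<and> b = r then c else 0))"

lemma msupported_munipotent: "r < m \<Longrightarrow> msupported m (munipotent m r c)"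
  by (auto simp: msupported_def munipotent_def mident_def)

lemma mmul_munipotent_left:
  assumes "a < m" "b < m" "r < m"
  shows "mmul m (munipotent m r c) B a b = B a b + (if a = 0 then c * B r b else 0)"
proof -
  have "mmul m (munipotent m r c) B a b
      = mmul m (mident m) B a b + (\<Sum>e<m. (if a = 0 \<and> e = r then c else 0) * B e b)"
    using assms by (simp add: mmul_eq_sum munipotent_def distrib_right sum.distrib)
  also have "\<dots> = B a b + (if a = 0 then c * B r b else 0)"
    using assms by (simp add: mmul_mident_left_eq if_distrib[of "\<lambda>x. x * _"] cong: if_cong)
  finally show ?thesis .
qed

lemma mmul_munipotent_right:
  assumes "a < m" "b < m"
  shows "mmul m B (munipotent m r c) a b = B a b + (if b = r then c * B a 0 else 0)"
proof -
  have "mmul m B (munipotent m r c) a b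
      = mmul m B (mident m) a b + (\<Sum>e<m. B a e * (if e = 0 \<and> b = r then c else 0))"
    using assms by (simp add: mmul_eq_sum munipotent_def distrib_left sum.distrib)
  also have "\<dots> = B a b + (if b = r then c * B a 0 else 0)"
    using assms by (simp add: mmul_mident_right_eq if_distrib[of "\<lambda>x. _ * x"] cong: if_cong)
  finally show ?thesis .
qed

lemma mmul_munipotent_neg:
  assumes "0 < r" "r < m"
  shows "mmul m (munipotent m r c) (munipotent m r (- c)) = mident m"
proof (intro ext)
  fix a b
  show "mmul m (munipotent m r c) (munipotent m r (- c)) a b = mident m a b"
  proof (cases "a < m \<and> b < m")
    case True
    then show ?thesis
      using assms by (simp add: mmul_munipotent_left) (auto simp: munipotent_def mident_def)
  qed (auto simp: mmul_eq_zero_outside mident_def)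
qed

lemma minv_munipotent:
  assumes "0 < r" "r < m"
  shows "minv m (munipotent m r c) = munipotent m r (- c)"
  using mmul_munipotent_neg[OF assms, of c] mmul_munipotent_neg[OF assms, of "- c"]
  by (intro minv_unique msupported_munipotent assms(2)) simp_all

lemma minv_mident: "minv m (mident m) = mident m"
  by (rule minv_unique) (simp_all add: mident_supported mmul_mident_left)

context mps_tensor
begin

lemma T_mps_update_zero:
  assumes "i \<in> {1..d}"
  shows "T ((\<lambda>_. 0)(i := c)) = (if c = 0 then 1 else 0)"
proof -
  have "(\<lambda>_. 0) \<in> A"
    using s_pos by (simp add: alpha_set_def)
  moreover have "mps (\<lambda>_. 0) = (\<lambda>_. 0)"
    by (auto simp: mps_index_def iota_def fun_eq_iff)
  ultimately show ?thesis
    using T_mps_update[of "\<lambda>_. 0" i c] assms by simp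
qed

context
  fixes i r :: nat
  assumes i: "i \<in> {1..d}" and r_eq: "r = s (i - 1) * s i" and r_less: "r < n i"
begin

lemma r_pos: "0 < r"
proof -
  have "i - 1 \<le> d" "i \<le> d"
    using i by auto
  then show ?thesis
    using s_pos_le by (simp add: r_eq)
qed

lemma T_mps_update_r: "T (j(i := r)) = 0"
  using i by (intro T_mps_eq_zero_if_large[of i]) (simp_all add: r_eq)

lemma annihilator_T_mps_corner:
  assumes y: "y \<in> annihilator d n T"
  shows "y i r 0 = 0"
proof -
  define j0 where "j0 = (\<lambda>_. 0::nat)(i := r)"
  have j0: "j0 \<in> multi_idx d n"
    using i r_less n2 by (force simp: j0_def multi_idx_def)
  have "lie_act d n y T j0 = (\<Sum>m\<in>{1..d}. if m = i then y i r 0 else 0)"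
  proof (rule trans[OF lie_act_eq_sum[OF j0]], intro sum.cong refl)
    fix m
    assume "m \<in> {1..d}"
    show "(\<Sum>c<n m. y m (j0 m) c * T (j0(m := c))) = (if m = i then y i r 0 else 0)"
    proof (cases "m = i")
      case True
      then show ?thesis
        using r_less by (simp add: j0_def T_mps_update_zero[OF i] if_distrib[of "\<lambda>x. _ * x"] cong: if_cong)
    next
      case False
      then have "j0(m := c) = (j0(m := c))(i := r)" for c
        by (simp add: j0_def fun_eq_iff)
      then show ?thesis
        using False T_mps_update_r by (metis (no_types, lifting) mult_zero_right sum.neutral)
    qed
  qed
  then show ?thesis
    using y i by (simp add: annihilator_def)
qed

lemma unipotent_in_stab: "gembed d n i (munipotent (n i) r c) \<in> stab d n T"
proof -
  have "gembed d n i (munipotent (n i) r c) \<in> gl_alg d n"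
    using msupported_munipotent[OF r_less]
    by (auto simp: gl_alg_def gembed_def msupported_def mident_def)
  moreover have "\<exists>B. (\<forall>a b. (a \<ge> n m \<or> b \<ge> n m) \<longrightarrow> B a b = 0)
      \<and> mmul (n m) (gembed d n i (munipotent (n i) r c) m) B = mident (n m)
      \<and> mmul (n m) B (gembed d n i (munipotent (n i) r c) m) = mident (n m)" if m: "m \<in> {1..d}" for m
  proof (cases "m = i")
    case True
    then show ?thesis
      using m msupported_munipotent[OF r_less] mmul_munipotent_neg[OF r_pos r_less, of c]
        mmul_munipotent_neg[OF r_pos r_less, of "- c"]
      by (intro exI[of _ "munipotent (n i) r (- c)"]) (simp add: gembed_def msupported_def)
  next
    case False
    then show ?thesis
      using m by (intro exI[of _ "mident (n m)"])
        (simp add: gembed_def mident_supported mmul_mident_left, simp add: mident_def)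
  qed
  moreover have "act d n (gembed d n i (munipotent (n i) r c)) T j = T j" for j
  proof (cases "j \<in> multi_idx d n")
    case True
    then have "act d n (gembed d n i (munipotent (n i) r c)) T j
        = (\<Sum>e<n i. (if e = j i then T j else 0) + (if j i = 0 \<and> e = r then c * T (j(i := r)) else 0))"
      using i by (simp add: act_gembed munipotent_def mident_def multi_idx_less distrib_right)
        (intro sum.cong refl; use r_pos in auto)
    also have "\<dots> = (\<Sum>e<n i. if e = j i then T j else 0)"
      by (simp only: T_mps_update_r mult_zero_right if_cancel add_0_right)
    also have "\<dots> = T j"
      using True i by (simp add: multi_idx_less)
    finally show ?thesis .
  qed (simp add: act_eq_zero_outside T_mps_outside)
  ultimately show ?thesis
    by (simp add: stab_def GL_grp_def fun_eq_iff)
qed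

lemma gconj_unipotent:
  assumes q: "q \<in> gl_alg d n"
  shows "gconj d n (gembed d n i (munipotent (n i) r 1)) q m a b =
    (if m = i \<and> a < n i \<and> b < n i
     then q i a b + (if a = 0 then q i r b else 0) - (if b = r then q i a 0 + (if a = 0 then q i r 0 else 0) else 0)
     else q m a b)"
proof (cases "m \<in> {1..d}")
  case False
  then show ?thesis
    using q i by (auto simp: gconj_def gl_alg_def)
next
  case m: True
  show ?thesis
  proof (cases "m = i")
    case False
    then show ?thesis
      using m gl_alg_msupported[OF q m]
      by (simp add: gconj_def gembed_def minv_mident mmul_mident_left mmul_mident_right)
  next
    case True
    show ?thesis
    proof (cases "a < n i \<and> b < n i")
      case ab: True
      let ?U = "munipotent (n i) r 1"
      have "gconj d n (gembed d n i ?U) q m a b = mmul (n i) (mmul (n i) ?U (q i)) (munipotent (n i) r (- 1)) a b"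
        using True m by (simp add: gconj_def gembed_def minv_munipotent[OF r_pos r_less])
      also have "\<dots> = mmul (n i) ?U (q i) a b - (if b = r then mmul (n i) ?U (q i) a 0 else 0)"
        using ab by (simp add: mmul_munipotent_right)
      finally show ?thesis
        using True ab r_less by (simp add: mmul_munipotent_left)
    next
      case False
      then show ?thesis
        using True q i by (auto simp: gconj_def mmul_eq_zero_outside gl_alg_def)
    qed
  qed
qed

lemma gconj_unipotent_second_difference:
  assumes q: "q \<in> gl_alg d n"
  defines "Ad \<equiv> gconj d n (gembed d n i (munipotent (n i) r 1))"
  shows "gadd (gadd (Ad (Ad q)) (gscale (-2) (Ad q))) q
    = (\<lambda>m a b. if m = i \<and> a = 0 \<and> b = r then -2 * q i r 0 else 0)"
proof (intro ext)
  fix m a b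
  have "Ad q \<in> gl_alg d n"
    by (simp add: Ad_def gconj_in_gl_alg)
  then show "gadd (gadd (Ad (Ad q)) (gscale (-2) (Ad q))) q m a b
      = (if m = i \<and> a = 0 \<and> b = r then -2 * q i r 0 else 0)"
    using q r_pos r_less
    by (cases "m = i \<and> a < n i \<and> b < n i")
       (auto simp: Ad_def gconj_unipotent gadd_def gscale_def gl_alg_def)
qed

lemma corner_in_annihilator: "(\<lambda>m a b. if m = i \<and> a = 0 \<and> b = r then c else 0) \<in> annihilator d n T"
proof -
  let ?Q = "\<lambda>m a b. if m = i \<and> a = 0 \<and> b = r then c else 0"
  have vanish: "?Q m (j m) e * T (j(m := e)) = 0" for j m e
    using T_mps_update_r[of j] by auto
  have "lie_act d n ?Q T j = 0" for j
  proof (cases "j \<in> multi_idx d n")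
    case True
    then show ?thesis
      by (simp only: lie_act_eq_sum vanish sum.neutral_const)
  qed (rule lie_act_eq_zero_outside)
  moreover have "?Q \<in> gl_alg d n"
    using i r_less by (auto simp: gl_alg_def)
  ultimately show ?thesis
    by (simp add: annihilator_def fun_eq_iff)
qed

lemma not_reductive: "\<not> reductive d n (stab d n T)"
proof
  assume "reductive d n (stab d n T)"
  then obtain P where P: "lin_subspace d n P" and PK: "P \<inter> annihilator d n T = {\<lambda>i a b. 0}"
    and plus: "{gadd X Y |X Y. X \<in> P \<and> Y \<in> annihilator d n T} = gl_alg d n"
    and inv: "\<forall>h\<in>stab d n T. gconj d n h ` P \<subseteq> P"
    unfolding reductive_def lie_alg_stab_T_mps by blast
  define X :: tup where "X = (\<lambda>m a b. if m = i \<and> a = r \<and> b = 0 then 1 else 0)"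
  have "X \<in> gl_alg d n"
    using i r_less by (auto simp: X_def gl_alg_def)
  then obtain p y where p: "p \<in> P" and y: "y \<in> annihilator d n T" and Xpy: "X = gadd p y"
    using plus by blast
  have p_corner: "p i r 0 = 1"
    using fun_cong[OF fun_cong[OF fun_cong[OF Xpy, of i], of r], of 0] annihilator_T_mps_corner[OF y]
    by (simp add: X_def gadd_def)
  define Ad where "Ad = gconj d n (gembed d n i (munipotent (n i) r 1))"
  have Ad: "Ad q \<in> P" if "q \<in> P" for q
    using inv unipotent_in_stab that by (auto simp: Ad_def)
  define Q where "Q = gadd (gadd (Ad (Ad p)) (gscale (-2) (Ad p))) p"
  have "Q \<in> P"
    unfolding Q_def using P p Ad by (blast intro: lin_subspace_gadd lin_subspace_gscale)
  moreover have Q: "Q = (\<lambda>m a b. if m = i \<and> a = 0 \<and> b = r then -2 else 0)"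
    unfolding Q_def Ad_def gconj_unipotent_second_difference[OF lin_subspace_gl_alg[OF P p]] p_corner
    by (simp add: fun_eq_iff)
  ultimately have "Q \<in> P \<inter> annihilator d n T"
    using corner_in_annihilator by simp
  with PK have "Q i 0 r = 0"
    by auto
  with Q show False
    by simp
qed

end

lemma reductive_imp_n_eq:
  assumes "reductive d n (stab d n T)"
  shows "\<forall>i\<in>{1..d}. n i = s (i - 1) * s i"
proof (rule ccontr)
  assume "\<not> (\<forall>i\<in>{1..d}. n i = s (i - 1) * s i)"
  then obtain i where i: "i \<in> {1..d}" and "n i \<noteq> s (i - 1) * s i"
    by blast
  with s_le_n have "s (i - 1) * s i < n i"
    by (simp add: order.not_eq_order_implies_strict)
  with not_reductive[OF i refl] assms show False
    by blast
qed

end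

theorem mainTheorem14:
  fixes d :: nat and n s :: "nat \<Rightarrow> nat"
  assumes "d \<ge> 3"
    and "\<forall>i\<in>{1..d}. n i \<ge> 2"
    and "\<forall>i\<in>{1..d-1}. s i > 0"
    and "s 0 = 1" and "s d = 1"
    and "\<forall>i\<in>{1..d}. s (i - 1) * s i \<le> n i"
  shows "(reductive d n (stab d n (T_mps d s)) \<longleftrightarrow> (\<forall>i\<in>{1..d}. n i = s (i - 1) * s i))
       \<and> ((\<forall>i\<in>{1..d}. n i = s (i - 1) * s i) \<longrightarrow>
           (\<forall>h\<in>stab d n (T_mps d s).
              gconj d n h ` orth_compl d n (lie_alg d n (stab d n (T_mps d s)))
                \<subseteq> orth_compl d n (lie_alg d n (stab d n (T_mps d s)))))"
proof -
  interpret mps_tensor d n s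
    using assms by unfold_locales
  have "reductive d n (stab d n T)" and "\<forall>h\<in>stab d n T. gconj d n h ` orth_compl d n (annihilator d n T)
      \<subseteq> orth_compl d n (annihilator d n T)"
    if "\<forall>i\<in>{1..d}. n i = s (i - 1) * s i"
    using transpose_closed_stabilizer.reductive_stab transpose_closed_stabilizer.gconj_orth_compl_annihilator
      transpose_closed_stabilizer_T_mps[OF that] by blast+
  then show ?thesis
    using reductive_imp_n_eq by (auto simp: lie_alg_stab_T_mps)
qed

end
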